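(* Let $X$ be a Hausdorff locally convex topological vector space over $\mathbb{R}$ with continuous dual $X^*$, let $V\subset X$ be compact, let $K\subset\mathbb{R}^d$ be compact, let $m\ge1$, let $G:V\to C(K;\mathbb{R}^m)$ be continuous (with $C(K;\mathbb{R}^m)$ carrying the uniform norm), and let $\sigma\in C(\mathbb{R})$ be a Tauber--Wiener function. Then for every $\varepsilon>0$ there exist an integer $p\ge1$, vectors $\omega_k\in\mathbb{R}^d$ and scalars $\zeta_k\in\mathbb{R}$ ($k=1,\dots,p$) defining the trunk map \[ \mathcal{T}(y)=\bigl(\sigma(\omega_1\cdot y+\zeta_1),\dots,\sigma(\omega_p\cdot y+\zeta_p)\bigr)^T\in\mathbb{R}^p, \] and a branch map $\mathcal{B}:X\to\mathbb{R}^{m\times p}$ whose $p$ columns $b_1,\dots,b_p:X\to\mathbb{R}^m$ are single-hidden-layer topological neural networks on $X$, such that \[ \sup_{u\in V}\ \sup_{y\in K}\bigl\|G(u)(y)-\mathcal{B}(u)\mathcal{T}(y)\bigr\|_{\mathbb{R}^m}<\varepsilon . \]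
   Context: A function $\sigma:\mathbb{R}\to\mathbb{R}$ is a Tauber--Wiener function if the linear span of $\{t\mapsto\sigma(wt-\theta): w,\theta\in\mathbb{R}\}$ is dense in $C([a,b])$ (uniform norm) for every closed interval $[a,b]\subset\mathbb{R}$. A (vector-valued, single-hidden-layer) topological feedforward neural network on $X$ is a map $H:X\to\mathbb{R}^m$ of the form $H(x)=A\,\sigma(T(x))$, where $T(x)=(f_1(x)-\theta_1,\dots,f_r(x)-\theta_r)$ for some $r\ge1$, $f_i\in X^*$, $\theta_i\in\mathbb{R}$, $A\in\mathbb{R}^{m\times r}$, and $\sigma$ acts componentwise on $\mathbb{R}^r$. $\mathcal{B}(u)\mathcal{T}(y)=\sum_{k=1}^p b_k(u)\,t_k(y)$ is the matrix–vector product. $\|\cdot\|_{\mathbb{R}^m}$ is any fixed norm on $\mathbb{R}^m$. *)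

theory Defs
  imports "HOL-Analysis.Analysis"
begin

definition hlc_tvs :: "'a::real_vector topology \<Rightarrow> bool" where
  "hlc_tvs T \<longleftrightarrow>
     topspace T = UNIV \<and>
     continuous_map (prod_topology T T) T (\<lambda>(x, y). x + y) \<and>
     continuous_map (prod_topology euclideanreal T) T (\<lambda>(c, x). c *\<^sub>R x) \<and>
     Hausdorff_space T \<and>
     (\<forall>W. openin T W \<and> 0 \<in> W \<longrightarrow> (\<exists>U. openin T U \<and> convex U \<and> 0 \<in> U \<and> U \<subseteq> W))"

definition tvs_dual :: "'a::real_vector topology \<Rightarrow> ('a \<Rightarrow> real) set" where
  "tvs_dual T = {f. linear f \<and> continuous_map T euclideanreal f}"

definition tauber_wiener :: "(real \<Rightarrow> real) \<Rightarrow> bool" where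
  "tauber_wiener \<sigma> \<longleftrightarrow>
     (\<forall>a b g e. a < b \<and> continuous_on {a..b} g \<and> e > 0 \<longrightarrow>
        (\<exists>(n::nat) c w \<theta>. \<forall>t\<in>{a..b}.
            \<bar>g t - (\<Sum>i<n. c i * \<sigma> (w i * t - \<theta> i))\<bar> < e))"

definition topo_nn :: "'a::real_vector topology \<Rightarrow> (real \<Rightarrow> real) \<Rightarrow> ('a \<Rightarrow> real^'m) \<Rightarrow> bool" where
  "topo_nn T \<sigma> H \<longleftrightarrow>
     (\<exists>(r::nat) f \<theta> (A :: 'm \<Rightarrow> nat \<Rightarrow> real). r \<ge> 1 \<and> (\<forall>i<r. f i \<in> tvs_dual T) \<and>
        (\<forall>x. H x = (\<chi> j. \<Sum>i<r. A j i * \<sigma> (f i x - \<theta> i))))"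

end

(* By Hahn-Banach, applied to the Minkowski functional of a convex symmetric
   neighbourhood of 0, the continuous dual separates the points of X.  Hence on the compact set V
   the topology is controlled by finitely many functionals: every u in V has a weak neighbourhood
   {x. |f x - f u| < 1 for all f in F u} on which G moves by at most e, finitely many of them
   cover V, and normalised products of tent functions of the values f x form a partition of
   unity (a u) with G x y close to the sum of a u x * G u y.
   Each a u is a continuous function of finitely many functional values and each G u is
   continuous on K, so both are uniform limits of ridge networks sum_i sigma (l_i z - theta_i) v_i:
   by Stone-Weierstrass the sums of cosine ridges c cos (l z + b) are dense, and the
   Tauber-Wiener property approximates each cosine on a bounded interval.  Multiplying the
   expansion of a u (in the functionals, the branch) with that of G u (in y, the trunk) gives
   the required form. *)

theory Submission
  imports Defs
begin

section \<open>Density of ridge networks\<close>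

definition finite_sums :: "'i set \<Rightarrow> ('i \<Rightarrow> 'b \<Rightarrow> 'c::comm_monoid_add) \<Rightarrow> ('b \<Rightarrow> 'c) set" where
  "finite_sums A F = {f. \<exists>(n::nat) a. (\<forall>i<n. a i \<in> A) \<and> f = (\<lambda>x. \<Sum>i<n. F (a i) x)}"

lemma finite_sums_zero: "(\<lambda>x. 0) \<in> finite_sums A F"
  unfolding finite_sums_def by (intro CollectI exI[of _ 0]) simp

lemma finite_sums_add_term:
  assumes "f \<in> finite_sums A F" and "a \<in> A"
  shows "(\<lambda>x. f x + F a x) \<in> finite_sums A F"
proof -
  obtain n as where "\<forall>i<n. as i \<in> A" and "f = (\<lambda>x. \<Sum>i<(n::nat). F (as i) x)"
    using assms(1) unfolding finite_sums_def by blast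
  then show ?thesis
    unfolding finite_sums_def using assms(2)
    by (intro CollectI exI[of _ "Suc n"] exI[of _ "as(n := a)"]) (auto simp: less_Suc_eq)
qed

lemma finite_sums_term: "a \<in> A \<Longrightarrow> F a \<in> finite_sums A F"
  using finite_sums_add_term[OF finite_sums_zero] by fastforce

lemma finite_sums_add:
  assumes f: "f \<in> finite_sums A F" and g: "g \<in> finite_sums A F"
  shows "(\<lambda>x. f x + g x) \<in> finite_sums A F"
proof -
  obtain n as where as: "\<forall>i<n. as i \<in> A" and g_eq: "g = (\<lambda>x. \<Sum>i<(n::nat). F (as i) x)"
    using g unfolding finite_sums_def by blast
  have "(\<lambda>x. f x + (\<Sum>i<m. F (as i) x)) \<in> finite_sums A F" if "m \<le> n" for m
    using that
  proof (induction m)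
    case 0
    then show ?case using f by simp
  next
    case (Suc m)
    then show ?case
      using finite_sums_add_term[OF Suc.IH, of "as m"] as by (simp add: add.assoc)
  qed
  then show ?thesis by (simp add: g_eq)
qed

lemma finite_sums_sum:
  assumes "\<And>i. i \<in> I \<Longrightarrow> f i \<in> finite_sums A F"
  shows "(\<lambda>x. \<Sum>i\<in>I. f i x) \<in> finite_sums A F"
  using assms
  by (induction I rule: infinite_finite_induct) (simp_all add: finite_sums_zero finite_sums_add)

lemma finite_sums_nonempty:
  assumes "f \<in> finite_sums A F" and "a\<^sub>0 \<in> A" and "F a\<^sub>0 = (\<lambda>x. 0)"
  shows "\<exists>(n::nat) a. n \<ge> 1 \<and> (\<forall>i<n. a i \<in> A) \<and> f = (\<lambda>x. \<Sum>i<n. F (a i) x)"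
proof -
  obtain n as where "\<forall>i<n. as i \<in> A" and "f = (\<lambda>x. \<Sum>i<(n::nat). F (as i) x)"
    using assms(1) unfolding finite_sums_def by blast
  then show ?thesis
    using assms(2,3) by (intro exI[of _ "Suc n"] exI[of _ "as(n := a\<^sub>0)"]) (auto simp: less_Suc_eq)
qed

definition ridge_nets :: "('b \<Rightarrow> real) set \<Rightarrow> (real \<Rightarrow> real) \<Rightarrow> ('b \<Rightarrow> 'c::real_vector) set" where
  "ridge_nets L \<sigma> = finite_sums {(l, \<theta>, v). l \<in> L} (\<lambda>(l, \<theta>, v) z. \<sigma> (l z - \<theta>) *\<^sub>R v)"

lemma ridge_nets_iff:
  "h \<in> ridge_nets L \<sigma> \<longleftrightarrow>
     (\<exists>(n::nat) l \<theta> v. (\<forall>i<n. l i \<in> L) \<and> h = (\<lambda>z. \<Sum>i<n. \<sigma> (l i z - \<theta> i) *\<^sub>R v i))"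
    (is "_ \<longleftrightarrow> ?explicit")
proof
  assume "h \<in> ridge_nets L \<sigma>"
  then obtain n a where "\<forall>i<n. a i \<in> {(l, \<theta>, v). l \<in> L}"
    and "h = (\<lambda>z. \<Sum>i<(n::nat). (\<lambda>(l, \<theta>, v) z. \<sigma> (l z - \<theta>) *\<^sub>R v) (a i) z)"
    unfolding ridge_nets_def finite_sums_def by blast
  then show ?explicit
    by (intro exI[of _ n] exI[of _ "\<lambda>i. fst (a i)"] exI[of _ "\<lambda>i. fst (snd (a i))"]
        exI[of _ "\<lambda>i. snd (snd (a i))"]) (auto simp: case_prod_beta)
next
  assume ?explicit
  then obtain n l \<theta> v where "\<forall>i<(n::nat). l i \<in> L"
    and "h = (\<lambda>z. \<Sum>i<n. \<sigma> (l i z - \<theta> i) *\<^sub>R v i)"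
    by blast
  then show "h \<in> ridge_nets L \<sigma>"
    unfolding ridge_nets_def finite_sums_def
    by (intro CollectI exI[of _ n] exI[of _ "\<lambda>i. (l i, \<theta> i, v i)"]) auto
qed

lemma ridge_nets_zero: "(\<lambda>z. 0) \<in> ridge_nets L \<sigma>"
  unfolding ridge_nets_def by (rule finite_sums_zero)

lemma ridge_nets_term: "l \<in> L \<Longrightarrow> (\<lambda>z. \<sigma> (l z - \<theta>) *\<^sub>R v) \<in> ridge_nets L \<sigma>"
  unfolding ridge_nets_iff
  by (intro exI[of _ 1] exI[of _ "\<lambda>_. l"] exI[of _ "\<lambda>_. \<theta>"] exI[of _ "\<lambda>_. v"]) simp

lemma ridge_nets_add:
  "h \<in> ridge_nets L \<sigma> \<Longrightarrow> h' \<in> ridge_nets L \<sigma> \<Longrightarrow> (\<lambda>z. h z + h' z) \<in> ridge_nets L \<sigma>"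
  unfolding ridge_nets_def by (rule finite_sums_add)

lemma ridge_nets_sum:
  "(\<And>i. i \<in> I \<Longrightarrow> h i \<in> ridge_nets L \<sigma>) \<Longrightarrow> (\<lambda>z. \<Sum>i\<in>I. h i z) \<in> ridge_nets L \<sigma>"
  unfolding ridge_nets_def by (rule finite_sums_sum)

lemma ridge_nets_scaleR:
  assumes "h \<in> ridge_nets L \<sigma>"
  shows "(\<lambda>z. h z *\<^sub>R v) \<in> ridge_nets L \<sigma>"
proof -
  obtain n l \<theta> c where "\<forall>i<(n::nat). l i \<in> L" and h: "h = (\<lambda>z. \<Sum>i<n. \<sigma> (l i z - \<theta> i) *\<^sub>R c i)"
    using assms unfolding ridge_nets_iff by blast
  then have "(\<lambda>z. \<Sum>i<n. \<sigma> (l i z - \<theta> i) *\<^sub>R (c i *\<^sub>R v)) \<in> ridge_nets L \<sigma>"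
    by (intro ridge_nets_sum ridge_nets_term) auto
  then show ?thesis
    by (simp add: h scaleR_sum_left)
qed

lemma ridge_nets_comp:
  assumes "h \<in> ridge_nets L \<sigma>" and "\<And>l. l \<in> L \<Longrightarrow> (\<lambda>x. l (\<Phi> x)) \<in> L'"
  shows "(\<lambda>x. h (\<Phi> x)) \<in> ridge_nets L' \<sigma>"
proof -
  obtain n l \<theta> v where "\<forall>i<(n::nat). l i \<in> L" and h: "h = (\<lambda>z. \<Sum>i<n. \<sigma> (l i z - \<theta> i) *\<^sub>R v i)"
    using assms(1) unfolding ridge_nets_iff by blast
  then have "(\<lambda>x. \<Sum>i<n. \<sigma> (l i (\<Phi> x) - \<theta> i) *\<^sub>R v i) \<in> ridge_nets L' \<sigma>"
    using assms(2) by (intro ridge_nets_sum ridge_nets_term) auto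
  then show ?thesis by (simp add: h)
qed

definition uniformly_approximable :: "'b set \<Rightarrow> ('b \<Rightarrow> 'c::real_normed_vector) set \<Rightarrow> ('b \<Rightarrow> 'c) \<Rightarrow> bool" where
  "uniformly_approximable S N f \<longleftrightarrow> (\<forall>e>0. \<exists>h\<in>N. \<forall>x\<in>S. norm (f x - h x) < e)"

lemma uniformly_approximable_trans:
  assumes f: "uniformly_approximable S M f"
    and M: "\<And>g. g \<in> M \<Longrightarrow> uniformly_approximable S N g"
  shows "uniformly_approximable S N f"
  unfolding uniformly_approximable_def
proof (intro allI impI)
  fix e :: real assume "e > 0"
  then have "e/2 > 0" by simp
  then obtain g where "g \<in> M" and g: "\<forall>x\<in>S. norm (f x - g x) < e/2"
    using f unfolding uniformly_approximable_def by blast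
  then obtain h where "h \<in> N" and h: "\<forall>x\<in>S. norm (g x - h x) < e/2"
    using M \<open>e/2 > 0\<close> unfolding uniformly_approximable_def by blast
  have "\<forall>x\<in>S. norm (f x - h x) < e"
    using norm_diff_triangle_less[OF g[rule_format] h[rule_format]] by simp
  with \<open>h \<in> N\<close> show "\<exists>h\<in>N. \<forall>x\<in>S. norm (f x - h x) < e" by blast
qed

lemma uniformly_approximable_add:
  assumes N: "\<And>h h'. h \<in> N \<Longrightarrow> h' \<in> N \<Longrightarrow> (\<lambda>x. h x + h' x) \<in> N"
    and f: "uniformly_approximable S N f" and g: "uniformly_approximable S N g"
  shows "uniformly_approximable S N (\<lambda>x. f x + g x)"
  unfolding uniformly_approximable_def
proof (intro allI impI)
  fix e :: real assume "e > 0"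
  then have "e/2 > 0" by simp
  then obtain h h' where "h \<in> N" "h' \<in> N"
    and h: "\<forall>x\<in>S. norm (f x - h x) < e/2" and h': "\<forall>x\<in>S. norm (g x - h' x) < e/2"
    using f g unfolding uniformly_approximable_def by meson
  have "norm ((f x + g x) - (h x + h' x)) < e" if "x \<in> S" for x
  proof -
    have "norm ((f x + g x) - (h x + h' x)) \<le> norm (f x - h x) + norm (g x - h' x)"
      using norm_triangle_ineq[of "f x - h x" "g x - h' x"] by (simp add: algebra_simps)
    moreover have "norm (f x - h x) < e/2" and "norm (g x - h' x) < e/2"
      using h h' that by auto
    ultimately show ?thesis by linarith
  qed
  then show "\<exists>h\<in>N. \<forall>x\<in>S. norm (f x + g x - h x) < e"
    using N[OF \<open>h \<in> N\<close> \<open>h' \<in> N\<close>] by (intro bexI[of _ "\<lambda>x. h x + h' x"]) auto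
qed

lemma uniformly_approximable_sum:
  assumes N: "(\<lambda>x. 0) \<in> N" "\<And>h h'. h \<in> N \<Longrightarrow> h' \<in> N \<Longrightarrow> (\<lambda>x. h x + h' x) \<in> N"
    and f: "\<And>i. i \<in> I \<Longrightarrow> uniformly_approximable S N (f i)"
  shows "uniformly_approximable S N (\<lambda>x. \<Sum>i\<in>I. f i x)"
  using f
proof (induction I rule: infinite_finite_induct)
  case (insert i I)
  then show ?case by (simp add: uniformly_approximable_add[OF N(2)])
qed (use N(1) in \<open>auto simp: uniformly_approximable_def intro!: bexI[of _ "\<lambda>x. 0"]\<close>)

lemma uniformly_approximable_comp:
  assumes "uniformly_approximable S N g" and "\<Phi> ` V \<subseteq> S"
    and "\<And>h. h \<in> N \<Longrightarrow> (\<lambda>x. h (\<Phi> x)) \<in> N'"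
  shows "uniformly_approximable V N' (\<lambda>x. g (\<Phi> x))"
  unfolding uniformly_approximable_def
proof (intro allI impI)
  fix e :: real assume "e > 0"
  then obtain h where "h \<in> N" and "\<forall>z\<in>S. norm (g z - h z) < e"
    using assms(1) unfolding uniformly_approximable_def by blast
  then show "\<exists>h\<in>N'. \<forall>x\<in>V. norm (g (\<Phi> x) - h x) < e"
    using assms(2,3) by (intro bexI[of _ "\<lambda>x. h (\<Phi> x)"]) auto
qed

lemma uniformly_approximable_choice:
  assumes "\<And>u. u \<in> U \<Longrightarrow> uniformly_approximable S N (f u)" and "0 < e"
  obtains h where "\<And>u. u \<in> U \<Longrightarrow> h u \<in> N"
    and "\<And>u x. u \<in> U \<Longrightarrow> x \<in> S \<Longrightarrow> norm (f u x - h u x) < e"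
proof -
  have "\<forall>u\<in>U. \<exists>h. h \<in> N \<and> (\<forall>x\<in>S. norm (f u x - h x) < e)"
    using assms unfolding uniformly_approximable_def by blast
  from bchoice[OF this] obtain h where "\<forall>u\<in>U. h u \<in> N \<and> (\<forall>x\<in>S. norm (f u x - h u x) < e)"
    by blast
  then show ?thesis using that by blast
qed

inductive_set cos_ridges :: "('b \<Rightarrow> real) set \<Rightarrow> ('b \<Rightarrow> real) set" for L where
  cos_ridge: "l \<in> L \<Longrightarrow> (\<lambda>z. a * cos (l z + b)) \<in> cos_ridges L"
| add: "f \<in> cos_ridges L \<Longrightarrow> g \<in> cos_ridges L \<Longrightarrow> (\<lambda>z. f z + g z) \<in> cos_ridges L"

locale separating_linear_family =
  fixes L :: "('b::t2_space \<Rightarrow> real) set" and S :: "'b set"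
  assumes compact: "compact S"
    and continuous: "\<And>l. l \<in> L \<Longrightarrow> continuous_on S l"
    and zero_mem: "(\<lambda>z. 0) \<in> L"
    and add_mem: "\<And>l l'. l \<in> L \<Longrightarrow> l' \<in> L \<Longrightarrow> (\<lambda>z. l z + l' z) \<in> L"
    and scale_mem: "\<And>l c. l \<in> L \<Longrightarrow> (\<lambda>z. c * l z) \<in> L"
    and separating: "\<And>x y. x \<in> S \<Longrightarrow> y \<in> S \<Longrightarrow> x \<noteq> y \<Longrightarrow> \<exists>l\<in>L. l x \<noteq> l y"
begin

lemma cos_ridges_continuous: "f \<in> cos_ridges L \<Longrightarrow> continuous_on S f"
  by (induction rule: cos_ridges.induct) (auto intro!: continuous_intros simp: continuous)

lemma cos_ridges_const: "(\<lambda>z. c) \<in> cos_ridges L"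
  using cos_ridges.cos_ridge[OF zero_mem, of c 0] by simp

lemma cos_ridges_mult_cos_ridge:
  assumes l: "l \<in> L" and g: "g \<in> cos_ridges L"
  shows "(\<lambda>z. a * cos (l z + b) * g z) \<in> cos_ridges L"
  using g
proof (induction rule: cos_ridges.induct)
  case (cos_ridge l' a' b')
  have "(\<lambda>z. (a * a' / 2) * cos ((l z + -1 * l' z) + (b - b'))
      + (a * a' / 2) * cos ((l z + l' z) + (b + b'))) \<in> cos_ridges L"
    by (intro cos_ridges.intros add_mem scale_mem l cos_ridge)
  moreover have "cos (l z + b) * cos (l' z + b') =
      (cos ((l z - l' z) + (b - b')) + cos ((l z + l' z) + (b + b'))) / 2" for z
    by (simp add: cos_times_cos algebra_simps)
  ultimately show ?case
    by (simp add: algebra_simps add_divide_distrib)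
next
  case (add f g)
  then show ?case
    using cos_ridges.add[OF add.IH] by (simp add: distrib_left)
qed

lemma cos_ridges_mult:
  assumes "f \<in> cos_ridges L" and g: "g \<in> cos_ridges L"
  shows "(\<lambda>z. f z * g z) \<in> cos_ridges L"
  using assms(1)
proof (induction rule: cos_ridges.induct)
  case (cos_ridge l a b)
  then show ?case using cos_ridges_mult_cos_ridge[OF cos_ridge g] by simp
next
  case (add f1 f2)
  then show ?case using cos_ridges.add[OF add.IH] by (simp add: distrib_right)
qed

lemma cos_ridges_separating:
  assumes "x \<in> S" "y \<in> S" "x \<noteq> y"
  shows "\<exists>f\<in>cos_ridges L. f x \<noteq> f y"
proof -
  obtain l where l: "l \<in> L" "l x \<noteq> l y"
    using separating[OF assms] by blast
  define d where "d = l x - l y"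
  define s where "s = (pi/2) / d"
  have "d \<noteq> 0"
    using l(2) by (simp add: d_def)
  then have "s * d = pi/2"
    by (simp add: s_def)
  then have "s * l x + (pi/2 - s * l y) = pi" and "s * l y + (pi/2 - s * l y) = pi/2"
    by (simp_all add: d_def algebra_simps)
  then have "cos (s * l x + (pi/2 - s * l y)) \<noteq> cos (s * l y + (pi/2 - s * l y))"
    by simp
  moreover have "(\<lambda>z. 1 * cos (s * l z + (pi/2 - s * l y))) \<in> cos_ridges L"
    using scale_mem[OF l(1)] by (rule cos_ridges.cos_ridge)
  ultimately show ?thesis
    by (intro bexI[of _ "\<lambda>z. 1 * cos (s * l z + (pi/2 - s * l y))"]) simp_all
qed

lemma cos_ridges_dense:
  assumes g: "continuous_on S g"
  shows "uniformly_approximable S (cos_ridges L) g"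
  unfolding uniformly_approximable_def real_norm_def
proof (intro allI impI)
  fix e :: real assume "e > 0"
  show "\<exists>h\<in>cos_ridges L. \<forall>x\<in>S. \<bar>g x - h x\<bar> < e"
    using Stone_Weierstrass_HOL[where P = "\<lambda>f. f \<in> cos_ridges L", OF compact cos_ridges_const
        cos_ridges_continuous _ cos_ridges_mult _ g \<open>e > 0\<close>]
      cos_ridges.add cos_ridges_separating
    by blast
qed

lemma cos_ridge_approximable:
  assumes \<sigma>: "tauber_wiener \<sigma>" and l: "l \<in> L"
  shows "uniformly_approximable S (ridge_nets L \<sigma>) (\<lambda>z. a * cos (l z + b))"
  unfolding uniformly_approximable_def real_norm_def
proof (intro allI impI)
  fix e :: real assume "e > 0"
  obtain M where M: "\<forall>z\<in>S. \<bar>l z\<bar> \<le> M"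
    using compact_imp_bounded[OF compact_continuous_image[OF continuous[OF l] compact]]
    unfolding bounded_iff by auto
  define r where "r = \<bar>M\<bar> + \<bar>b\<bar> + 1"
  have "e / (\<bar>a\<bar> + 1) > 0" using \<open>e > 0\<close> by simp
  moreover have "- r < r" by (simp add: r_def)
  ultimately obtain n c w \<theta> where approx:
      "\<forall>t\<in>{-r..r}. \<bar>cos t - (\<Sum>i<(n::nat). c i * \<sigma> (w i * t - \<theta> i))\<bar> < e / (\<bar>a\<bar> + 1)"
    using \<sigma> continuous_on_cos[OF continuous_on_id] unfolding tauber_wiener_def by blast
  define h where "h z = (\<Sum>i<n. \<sigma> (w i * l z - (\<theta> i - w i * b)) *\<^sub>R (a * c i))" for z
  have "h \<in> ridge_nets L \<sigma>"
    unfolding h_def[abs_def] by (intro ridge_nets_sum ridge_nets_term scale_mem l)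
  moreover have "\<bar>a * cos (l z + b) - h z\<bar> < e" if "z \<in> S" for z
  proof -
    have "l z + b \<in> {-r..r}" using M that by (auto simp: r_def abs_le_iff)
    have "\<bar>a * cos (l z + b) - h z\<bar> =
        \<bar>a\<bar> * \<bar>cos (l z + b) - (\<Sum>i<n. c i * \<sigma> (w i * (l z + b) - \<theta> i))\<bar>"
      by (simp add: h_def sum_distrib_left abs_mult[symmetric] algebra_simps)
    also have "\<dots> \<le> \<bar>a\<bar> * (e / (\<bar>a\<bar> + 1))"
      using approx \<open>l z + b \<in> {-r..r}\<close> by (intro mult_left_mono) (auto intro: less_imp_le)
    also have "\<dots> < e" using \<open>e > 0\<close> by (simp add: field_simps)
    finally show ?thesis .
  qed
  ultimately show "\<exists>h\<in>ridge_nets L \<sigma>. \<forall>z\<in>S. \<bar>a * cos (l z + b) - h z\<bar> < e" by blast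
qed

lemma ridge_nets_dense_real:
  fixes g :: "'b \<Rightarrow> real"
  assumes \<sigma>: "tauber_wiener \<sigma>" and g: "continuous_on S g"
  shows "uniformly_approximable S (ridge_nets L \<sigma>) g"
proof (rule uniformly_approximable_trans[OF cos_ridges_dense[OF g]])
  fix f assume "f \<in> cos_ridges L"
  then show "uniformly_approximable S (ridge_nets L \<sigma>) f"
  proof (induction rule: cos_ridges.induct)
    case (cos_ridge l a b)
    then show ?case by (rule cos_ridge_approximable[OF \<sigma>])
  next
    case (add f f')
    show ?case by (rule uniformly_approximable_add[OF ridge_nets_add add.IH])
  qed
qed

theorem ridge_nets_dense:
  fixes g :: "'b \<Rightarrow> 'c::euclidean_space"
  assumes \<sigma>: "tauber_wiener \<sigma>" and g: "continuous_on S g"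
  shows "uniformly_approximable S (ridge_nets L \<sigma>) g"
proof -
  have "uniformly_approximable S (ridge_nets L \<sigma>) (\<lambda>z. (g z \<bullet> i) *\<^sub>R i)" if "i \<in> Basis" for i
    unfolding uniformly_approximable_def
  proof (intro allI impI)
    fix e :: real assume "e > 0"
    then obtain h where "h \<in> ridge_nets L \<sigma>" and h: "\<forall>z\<in>S. \<bar>g z \<bullet> i - h z\<bar> < e"
      using ridge_nets_dense_real[OF \<sigma> continuous_on_inner[OF g continuous_on_const]]
      unfolding uniformly_approximable_def real_norm_def by blast
    moreover have "norm ((g z \<bullet> i) *\<^sub>R i - h z *\<^sub>R i) = \<bar>g z \<bullet> i - h z\<bar>" for z
      using that by (simp add: scaleR_diff_left[symmetric])
    ultimately show "\<exists>h\<in>ridge_nets L \<sigma>. \<forall>z\<in>S. norm ((g z \<bullet> i) *\<^sub>R i - h z) < e"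
      by (intro bexI[of _ "\<lambda>z. h z *\<^sub>R i"] ridge_nets_scaleR) auto
  qed
  then have "uniformly_approximable S (ridge_nets L \<sigma>) (\<lambda>z. \<Sum>i\<in>Basis. (g z \<bullet> i) *\<^sub>R i)"
    by (intro uniformly_approximable_sum ridge_nets_zero ridge_nets_add)
  then show ?thesis by (simp add: euclidean_representation)
qed

end

lemma continuous_on_coordinate [continuous_intros]: "continuous_on S (\<lambda>x. x i)"
  by (rule continuous_on_subset[OF continuous_on_product_coordinates subset_UNIV])

definition linear_combinations :: "('i \<Rightarrow> 'b \<Rightarrow> real) \<Rightarrow> 'i set \<Rightarrow> ('b \<Rightarrow> real) set" where
  "linear_combinations \<phi> I = {\<lambda>z. \<Sum>i\<in>I. w i * \<phi> i z | w. True}"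

lemma separating_linear_family_linear_combinations:
  fixes \<phi> :: "'i \<Rightarrow> 'b::t2_space \<Rightarrow> real"
  assumes S: "compact S" and I: "finite I" and \<phi>: "\<And>i. i \<in> I \<Longrightarrow> continuous_on S (\<phi> i)"
    and separating: "\<And>x y. x \<in> S \<Longrightarrow> y \<in> S \<Longrightarrow> x \<noteq> y \<Longrightarrow> \<exists>i\<in>I. \<phi> i x \<noteq> \<phi> i y"
  shows "separating_linear_family (linear_combinations \<phi> I) S"
  unfolding linear_combinations_def
proof
  fix l assume "l \<in> {\<lambda>z. \<Sum>i\<in>I. w i * \<phi> i z | w. True}"
  then show "continuous_on S l"
    using \<phi> by (auto intro!: continuous_intros)
next
  show "(\<lambda>z. 0) \<in> {\<lambda>z. \<Sum>i\<in>I. w i * \<phi> i z | w. True}"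
    by (intro CollectI exI[of _ "\<lambda>_. 0"]) simp
next
  fix l l' assume "l \<in> {\<lambda>z. \<Sum>i\<in>I. w i * \<phi> i z | w. True}" "l' \<in> {\<lambda>z. \<Sum>i\<in>I. w i * \<phi> i z | w. True}"
  then obtain w w' where "l = (\<lambda>z. \<Sum>i\<in>I. w i * \<phi> i z)" "l' = (\<lambda>z. \<Sum>i\<in>I. w' i * \<phi> i z)"
    by blast
  then show "(\<lambda>z. l z + l' z) \<in> {\<lambda>z. \<Sum>i\<in>I. w i * \<phi> i z | w. True}"
    by (intro CollectI exI[of _ "\<lambda>i. w i + w' i"]) (simp add: sum.distrib distrib_right)
next
  fix l c assume "l \<in> {\<lambda>z. \<Sum>i\<in>I. w i * \<phi> i z | w. True}"
  then obtain w where "l = (\<lambda>z. \<Sum>i\<in>I. w i * \<phi> i z)"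
    by blast
  then show "(\<lambda>z. c * l z) \<in> {\<lambda>z. \<Sum>i\<in>I. w i * \<phi> i z | w. True}"
    by (intro CollectI exI[of _ "\<lambda>i. c * w i"]) (simp add: sum_distrib_left mult.assoc)
next
  fix x y assume "x \<in> S" "y \<in> S" "x \<noteq> y"
  then obtain j where "j \<in> I" "\<phi> j x \<noteq> \<phi> j y"
    using separating by blast
  define l where "l z = (\<Sum>i\<in>I. (if i = j then 1 else 0) * \<phi> i z)" for z
  have "l z = (\<Sum>i\<in>I. if i = j then \<phi> i z else 0)" for z
    unfolding l_def by (rule sum.cong) auto
  then have "l x \<noteq> l y"
    using \<open>j \<in> I\<close> \<open>\<phi> j x \<noteq> \<phi> j y\<close> I by simp
  moreover have "l \<in> {\<lambda>z. \<Sum>i\<in>I. w i * \<phi> i z | w. True}"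
    unfolding l_def by (rule CollectI, rule exI[of _ "\<lambda>i. if i = j then 1 else 0"]) simp
  ultimately show "\<exists>l\<in>{\<lambda>z. \<Sum>i\<in>I. w i * \<phi> i z | w. True}. l x \<noteq> l y"
    by (rule bexI)
qed (rule S)

section \<open>The Hahn--Banach theorem\<close>

definition sublinear :: "('a::real_vector \<Rightarrow> real) \<Rightarrow> bool" where
  "sublinear p \<longleftrightarrow> (\<forall>x y. p (x + y) \<le> p x + p y) \<and> (\<forall>c x. 0 < c \<longrightarrow> p (c *\<^sub>R x) = c * p x)"

lemma sublinear_add: "sublinear p \<Longrightarrow> p (x + y) \<le> p x + p y"
  unfolding sublinear_def by blast

lemma sublinear_pos_scaleR: "sublinear p \<Longrightarrow> 0 < c \<Longrightarrow> p (c *\<^sub>R x) = c * p x"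
  unfolding sublinear_def by blast

lemma sublinear_zero: "sublinear p \<Longrightarrow> p 0 = 0"
  using sublinear_pos_scaleR[of p 2 0] by simp

lemma sublinear_neg: "sublinear p \<Longrightarrow> 0 \<le> p x + p (- x)"
  using sublinear_add[of p x "- x"] sublinear_zero[of p] by simp

(* Partial linear functionals are represented by their graphs, so that Zorn's lemma can be
   applied to set inclusion. *)
definition linear_graph :: "('a::real_vector \<times> real) set \<Rightarrow> bool" where
  "linear_graph G \<longleftrightarrow>
     (0, 0) \<in> G \<and>
     (\<forall>x a b. (x, a) \<in> G \<longrightarrow> (x, b) \<in> G \<longrightarrow> a = b) \<and>
     (\<forall>x a y b. (x, a) \<in> G \<longrightarrow> (y, b) \<in> G \<longrightarrow> (x + y, a + b) \<in> G) \<and>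
     (\<forall>x a c. (x, a) \<in> G \<longrightarrow> (c *\<^sub>R x, c * a) \<in> G)"

definition dominated_linear_graph :: "('a::real_vector \<Rightarrow> real) \<Rightarrow> ('a \<times> real) set \<Rightarrow> bool" where
  "dominated_linear_graph p G \<longleftrightarrow> linear_graph G \<and> (\<forall>x a. (x, a) \<in> G \<longrightarrow> a \<le> p x)"

lemma linear_graphD:
  assumes "linear_graph G"
  shows "(0, 0) \<in> G"
    and "(x, a) \<in> G \<Longrightarrow> (x, b) \<in> G \<Longrightarrow> a = b"
    and "(x, a) \<in> G \<Longrightarrow> (y, b) \<in> G \<Longrightarrow> (x + y, a + b) \<in> G"
    and "(x, a) \<in> G \<Longrightarrow> (c *\<^sub>R x, c * a) \<in> G"
  using assms unfolding linear_graph_def by blast+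

lemma linear_graph_Union_chain:
  assumes "C \<noteq> {}" and C: "\<And>G. G \<in> C \<Longrightarrow> linear_graph G"
    and comparable: "\<And>G H. G \<in> C \<Longrightarrow> H \<in> C \<Longrightarrow> G \<subseteq> H \<or> H \<subseteq> G"
  shows "linear_graph (\<Union>C)"
proof -
  have common: "\<exists>H\<in>C. (x, a) \<in> H \<and> (y, b) \<in> H" if "(x, a) \<in> \<Union>C" "(y, b) \<in> \<Union>C" for x a y b
    using that comparable by blast
  show ?thesis
    unfolding linear_graph_def
  proof (intro conjI allI impI)
    show "(0, 0) \<in> \<Union>C" using assms(1) C linear_graphD(1) by blast
  next
    fix x a b assume "(x, a) \<in> \<Union>C" "(x, b) \<in> \<Union>C"
    then show "a = b" using common C linear_graphD(2) by metis
  next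
    fix x a y b assume "(x, a) \<in> \<Union>C" "(y, b) \<in> \<Union>C"
    then show "(x + y, a + b) \<in> \<Union>C" using common C linear_graphD(3) by (metis UnionI)
  next
    fix x a c assume "(x, a) \<in> \<Union>C"
    then show "(c *\<^sub>R x, c * a) \<in> \<Union>C" using C linear_graphD(4) by blast
  qed
qed

lemma dominated_linear_graph_Union_chain:
  assumes "C \<noteq> {}" and C: "\<And>G. G \<in> C \<Longrightarrow> dominated_linear_graph p G"
    and "\<And>G H. G \<in> C \<Longrightarrow> H \<in> C \<Longrightarrow> G \<subseteq> H \<or> H \<subseteq> G"
  shows "dominated_linear_graph p (\<Union>C)"
proof -
  have "linear_graph (\<Union>C)"
    using assms by (intro linear_graph_Union_chain) (auto simp: dominated_linear_graph_def)
  moreover have "a \<le> p x" if "(x, a) \<in> \<Union>C" for x a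
    using that C by (auto simp: dominated_linear_graph_def)
  ultimately show ?thesis
    by (simp add: dominated_linear_graph_def)
qed

lemma total_linear_graph:
  assumes G: "linear_graph G" and total: "\<And>x. \<exists>a. (x, a) \<in> G"
  obtains f where "linear f" and "\<And>x. (x, f x) \<in> G"
proof -
  define f where "f x = (THE a. (x, a) \<in> G)" for x
  have f_eq: "f x = a" if "(x, a) \<in> G" for x a
    unfolding f_def using that linear_graphD(2)[OF G] by (intro the_equality)
  have f_in: "(x, f x) \<in> G" for x
    using total[of x] f_eq by blast
  have "linear f"
  proof (rule linearI)
    show "f (x + y) = f x + f y" for x y
      using f_eq[OF linear_graphD(3)[OF G f_in f_in]] .
    show "f (c *\<^sub>R x) = c *\<^sub>R f x" for c x
      using f_eq[OF linear_graphD(4)[OF G f_in]] by simp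
  qed
  then show ?thesis using f_in by (rule that)
qed

lemma linear_graph_offset_unique:
  assumes G: "linear_graph G" and w: "\<And>a. (w, a) \<notin> G"
    and "(x\<^sub>1, a\<^sub>1) \<in> G" "(x\<^sub>2, a\<^sub>2) \<in> G" and eq: "x\<^sub>1 + t\<^sub>1 *\<^sub>R w = x\<^sub>2 + t\<^sub>2 *\<^sub>R w"
  shows "t\<^sub>1 = t\<^sub>2"
proof (rule ccontr)
  assume "t\<^sub>1 \<noteq> t\<^sub>2"
  have "((1 / (t\<^sub>1 - t\<^sub>2)) *\<^sub>R (x\<^sub>2 + (-1) *\<^sub>R x\<^sub>1), (1 / (t\<^sub>1 - t\<^sub>2)) * (a\<^sub>2 + (-1) * a\<^sub>1)) \<in> G"
    using assms(3,4) by (intro linear_graphD(3,4)[OF G])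
  moreover have "x\<^sub>2 - x\<^sub>1 = (t\<^sub>1 - t\<^sub>2) *\<^sub>R w"
    using eq by (simp add: algebra_simps)
  then have "(1 / (t\<^sub>1 - t\<^sub>2)) *\<^sub>R (x\<^sub>2 + (-1) *\<^sub>R x\<^sub>1) = w"
    using \<open>t\<^sub>1 \<noteq> t\<^sub>2\<close> by simp
  ultimately show False using w by metis
qed

lemma linear_graph_extend:
  assumes G: "linear_graph G" and w: "\<And>a. (w, a) \<notin> G"
  shows "linear_graph {(x + t *\<^sub>R w, a + t * s) | x a t. (x, a) \<in> G}" (is "linear_graph ?G'")
  unfolding linear_graph_def
proof (intro conjI allI impI)
  show "(0, 0) \<in> ?G'"
    using linear_graphD(1)[OF G] by force
next
  fix v a b assume "(v, a) \<in> ?G'" "(v, b) \<in> ?G'"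
  then obtain x\<^sub>1 a\<^sub>1 t\<^sub>1 x\<^sub>2 a\<^sub>2 t\<^sub>2 where
      v: "v = x\<^sub>1 + t\<^sub>1 *\<^sub>R w" "v = x\<^sub>2 + t\<^sub>2 *\<^sub>R w" and ab: "a = a\<^sub>1 + t\<^sub>1 * s" "b = a\<^sub>2 + t\<^sub>2 * s"
      and G\<^sub>1\<^sub>2: "(x\<^sub>1, a\<^sub>1) \<in> G" "(x\<^sub>2, a\<^sub>2) \<in> G"
    by blast
  have "t\<^sub>1 = t\<^sub>2"
    using linear_graph_offset_unique[OF G w G\<^sub>1\<^sub>2] v by simp
  then have "x\<^sub>1 = x\<^sub>2" using v by simp
  then show "a = b"
    using ab \<open>t\<^sub>1 = t\<^sub>2\<close> linear_graphD(2)[OF G G\<^sub>1\<^sub>2(1)] G\<^sub>1\<^sub>2(2) by simp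
next
  fix v a v' b assume "(v, a) \<in> ?G'" "(v', b) \<in> ?G'"
  then obtain x\<^sub>1 a\<^sub>1 t\<^sub>1 x\<^sub>2 a\<^sub>2 t\<^sub>2 where "v = x\<^sub>1 + t\<^sub>1 *\<^sub>R w" "a = a\<^sub>1 + t\<^sub>1 * s" "(x\<^sub>1, a\<^sub>1) \<in> G"
      "v' = x\<^sub>2 + t\<^sub>2 *\<^sub>R w" "b = a\<^sub>2 + t\<^sub>2 * s" "(x\<^sub>2, a\<^sub>2) \<in> G"
    by blast
  moreover have "v + v' = (x\<^sub>1 + x\<^sub>2) + (t\<^sub>1 + t\<^sub>2) *\<^sub>R w" "a + b = (a\<^sub>1 + a\<^sub>2) + (t\<^sub>1 + t\<^sub>2) * s"
    using calculation by (simp_all add: algebra_simps)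
  ultimately show "(v + v', a + b) \<in> ?G'"
    using linear_graphD(3)[OF G] by blast
next
  fix v a c assume "(v, a) \<in> ?G'"
  then obtain x\<^sub>1 a\<^sub>1 t where "v = x\<^sub>1 + t *\<^sub>R w" "a = a\<^sub>1 + t * s" "(x\<^sub>1, a\<^sub>1) \<in> G"
    by blast
  moreover have "c *\<^sub>R v = c *\<^sub>R x\<^sub>1 + (c * t) *\<^sub>R w" "c * a = c * a\<^sub>1 + (c * t) * s"
    using calculation by (simp_all add: algebra_simps)
  ultimately show "(c *\<^sub>R v, c * a) \<in> ?G'"
    using linear_graphD(4)[OF G] by blast
qed

lemma dominated_extension_value:
  assumes p: "sublinear p" and G: "dominated_linear_graph p G"
  obtains s where "\<And>x a. (x, a) \<in> G \<Longrightarrow> a + s \<le> p (x + w) \<and> a - s \<le> p (x - w)"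
proof -
  have lin: "linear_graph G" and dom: "\<And>x a. (x, a) \<in> G \<Longrightarrow> a \<le> p x"
    using G unfolding dominated_linear_graph_def by auto
  have key: "b - p (y - w) \<le> p (x + w) - a" if "(x, a) \<in> G" "(y, b) \<in> G" for x a y b
  proof -
    have "a + b \<le> p ((x + w) + (y - w))"
      using dom[OF linear_graphD(3)[OF lin that]] by simp
    also have "\<dots> \<le> p (x + w) + p (y - w)"
      by (rule sublinear_add[OF p])
    finally show ?thesis by simp
  qed
  define B where "B = {b - p (y - w) | y b. (y, b) \<in> G}"
  have "B \<noteq> {}" using linear_graphD(1)[OF lin] by (auto simp: B_def)
  have "bdd_above B"
    using key[OF linear_graphD(1)[OF lin]] unfolding B_def bdd_above_def by blast
  show ?thesis
  proof (rule that)
    fix x a assume xa: "(x, a) \<in> G"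
    have "a - p (x - w) \<le> Sup B"
      by (rule cSup_upper[OF _ \<open>bdd_above B\<close>]) (use xa in \<open>auto simp: B_def\<close>)
    moreover have "Sup B \<le> p (x + w) - a"
      by (rule cSup_least[OF \<open>B \<noteq> {}\<close>]) (use key[OF xa] in \<open>auto simp: B_def\<close>)
    ultimately show "a + Sup B \<le> p (x + w) \<and> a - Sup B \<le> p (x - w)" by linarith
  qed
qed

lemma dominated_extension_bound:
  assumes p: "sublinear p" and G: "dominated_linear_graph p G"
    and s: "\<And>x a. (x, a) \<in> G \<Longrightarrow> a + s \<le> p (x + w) \<and> a - s \<le> p (x - w)"
    and xa: "(x, a) \<in> G"
  shows "a + t * s \<le> p (x + t *\<^sub>R w)"
proof -
  have lin: "linear_graph G" and dom: "\<And>x a. (x, a) \<in> G \<Longrightarrow> a \<le> p x"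
    using G unfolding dominated_linear_graph_def by auto
  consider "t > 0" | "t = 0" | "t < 0" by linarith
  then show ?thesis
  proof cases
    case 1
    have "(1/t) * a + s \<le> p ((1/t) *\<^sub>R x + w)"
      using s[OF linear_graphD(4)[OF lin xa]] by blast
    then have "t * ((1/t) * a + s) \<le> t * p ((1/t) *\<^sub>R x + w)"
      using 1 by (intro mult_left_mono) auto
    also have "\<dots> = p (t *\<^sub>R ((1/t) *\<^sub>R x + w))"
      using 1 by (simp add: sublinear_pos_scaleR[OF p])
    also have "t *\<^sub>R ((1/t) *\<^sub>R x + w) = x + t *\<^sub>R w"
      using 1 by (simp add: scaleR_add_right)
    finally show ?thesis using 1 by (simp add: algebra_simps)
  next
    case 2
    then show ?thesis using dom[OF xa] by simp
  next
    case 3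
    define u where "u = - t"
    have "u > 0" using 3 by (simp add: u_def)
    have "(1/u) * a - s \<le> p ((1/u) *\<^sub>R x - w)"
      using s[OF linear_graphD(4)[OF lin xa]] by blast
    then have "u * ((1/u) * a - s) \<le> u * p ((1/u) *\<^sub>R x - w)"
      using \<open>u > 0\<close> by (intro mult_left_mono) auto
    also have "\<dots> = p (u *\<^sub>R ((1/u) *\<^sub>R x - w))"
      using \<open>u > 0\<close> by (simp add: sublinear_pos_scaleR[OF p])
    also have "u *\<^sub>R ((1/u) *\<^sub>R x - w) = x + t *\<^sub>R w"
      using \<open>u > 0\<close> by (simp add: u_def scaleR_diff_right)
    finally show ?thesis using \<open>u > 0\<close> by (simp add: u_def algebra_simps)
  qed
qed

lemma maximal_dominated_linear_graph_total:
  assumes p: "sublinear p" and G: "dominated_linear_graph p G"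
    and maximal: "\<And>G'. dominated_linear_graph p G' \<Longrightarrow> G \<subseteq> G' \<Longrightarrow> G' = G"
  shows "\<exists>a. (w, a) \<in> G"
proof (rule ccontr)
  assume "\<nexists>a. (w, a) \<in> G"
  obtain s where s: "\<And>x a. (x, a) \<in> G \<Longrightarrow> a + s \<le> p (x + w) \<and> a - s \<le> p (x - w)"
    using dominated_extension_value[OF p G] by blast
  define G' where "G' = {(x + t *\<^sub>R w, a + t * s) | x a t. (x, a) \<in> G}"
  have "linear_graph G'"
    unfolding G'_def using G \<open>\<nexists>a. (w, a) \<in> G\<close>
    by (intro linear_graph_extend) (auto simp: dominated_linear_graph_def)
  moreover have "b \<le> p v" if "(v, b) \<in> G'" for v b
    using that dominated_extension_bound[OF p G s] unfolding G'_def by blast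
  moreover have "(x, a) \<in> G'" if "(x, a) \<in> G" for x a
    unfolding G'_def using that by (intro CollectI exI[of _ x] exI[of _ a] exI[of _ 0]) simp
  then have "G \<subseteq> G'" by auto
  ultimately have "G' = G"
    using maximal unfolding dominated_linear_graph_def by blast
  moreover have "(0, 0) \<in> G" and "(w, s) = (0 + 1 *\<^sub>R w, 0 + 1 * s)"
    using G by (simp_all add: dominated_linear_graph_def linear_graphD(1))
  then have "(w, s) \<in> G'"
    unfolding G'_def by blast
  ultimately show False using \<open>\<nexists>a. (w, a) \<in> G\<close> by blast
qed

theorem hahn_banach:
  assumes p: "sublinear p" and G\<^sub>0: "dominated_linear_graph p G\<^sub>0"
  shows "\<exists>f. linear f \<and> (\<forall>x a. (x, a) \<in> G\<^sub>0 \<longrightarrow> f x = a) \<and> (\<forall>x. f x \<le> p x)"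
proof -
  define \<G> where "\<G> = {G. dominated_linear_graph p G \<and> G\<^sub>0 \<subseteq> G}"
  have chain_bound: "\<exists>U\<in>\<G>. \<forall>G\<in>C. G \<subseteq> U" if "C \<in> chains \<G>" for C
  proof (cases "C = {}")
    case True
    then show ?thesis using G\<^sub>0 \<G>_def by auto
  next
    case False
    have C: "C \<subseteq> \<G>" and comparable: "\<And>G H. G \<in> C \<Longrightarrow> H \<in> C \<Longrightarrow> G \<subseteq> H \<or> H \<subseteq> G"
      using that unfolding chains_def chain_subset_def by blast+
    have "dominated_linear_graph p (\<Union>C)"
      by (rule dominated_linear_graph_Union_chain[OF False _ comparable]) (use C in \<open>auto simp: \<G>_def\<close>)
    moreover have "G\<^sub>0 \<subseteq> \<Union>C"
      using False C by (auto simp: \<G>_def)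
    ultimately have "\<Union>C \<in> \<G>"
      by (simp add: \<G>_def)
    then show ?thesis by blast
  qed
  have "\<exists>M\<in>\<G>. \<forall>G\<in>\<G>. M \<subseteq> G \<longrightarrow> G = M"
    by (rule Zorn_Lemma2) (use chain_bound in blast)
  then obtain M where "M \<in> \<G>" and maximal: "\<forall>G\<in>\<G>. M \<subseteq> G \<longrightarrow> G = M"
    by blast
  then have M: "dominated_linear_graph p M" and "G\<^sub>0 \<subseteq> M"
    by (simp_all add: \<G>_def)
  have "G = M" if "dominated_linear_graph p G" and "M \<subseteq> G" for G
    using maximal that \<open>G\<^sub>0 \<subseteq> M\<close> unfolding \<G>_def by blast
  then have "\<exists>a. (x, a) \<in> M" for x
    by (rule maximal_dominated_linear_graph_total[OF p M])
  moreover have lin: "linear_graph M"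
    using M by (simp add: dominated_linear_graph_def)
  ultimately obtain f where "linear f" and f: "\<And>x. (x, f x) \<in> M"
    using total_linear_graph by blast
  moreover have "f x = a" if "(x, a) \<in> G\<^sub>0" for x a
    using that \<open>G\<^sub>0 \<subseteq> M\<close> f linear_graphD(2)[OF lin] by blast
  moreover have "f x \<le> p x" for x
    using M f unfolding dominated_linear_graph_def by blast
  ultimately show ?thesis by blast
qed

lemma sublinear_line_bound:
  assumes p: "sublinear p"
  shows "c * p z \<le> p (c *\<^sub>R z)"
proof -
  consider "c > 0" | "c = 0" | "c < 0" by linarith
  then show ?thesis
  proof cases
    case 1
    then show ?thesis using sublinear_pos_scaleR[OF p] by simp
  next
    case 2
    then show ?thesis using sublinear_zero[OF p] by simp
  next
    case 3
    have "p (c *\<^sub>R z) = (- c) * p (- z)"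
      using 3 sublinear_pos_scaleR[OF p, of "- c" "- z"] by simp
    moreover have "(- c) * (p z + p (- z)) \<ge> 0"
      using 3 sublinear_neg[OF p, of z] by (simp add: mult_nonpos_nonneg)
    ultimately show ?thesis by (simp add: algebra_simps)
  qed
qed

lemma dominated_line_graph:
  assumes p: "sublinear p"
  shows "dominated_linear_graph p {(c *\<^sub>R z, c * p z) | c. True}" (is "dominated_linear_graph p ?G")
  unfolding dominated_linear_graph_def linear_graph_def
proof (intro conjI allI impI)
  show "(0, 0) \<in> ?G" by (auto intro: exI[of _ 0])
next
  fix x a b assume "(x, a) \<in> ?G" "(x, b) \<in> ?G"
  then obtain c d where "x = c *\<^sub>R z" "a = c * p z" "x = d *\<^sub>R z" "b = d * p z"
    by blast
  then show "a = b"
    using sublinear_zero[OF p] by (cases "z = 0") (auto simp: scaleR_cancel_right)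
next
  fix x a y b assume "(x, a) \<in> ?G" "(y, b) \<in> ?G"
  then obtain c d where "x = c *\<^sub>R z" "a = c * p z" "y = d *\<^sub>R z" "b = d * p z"
    by blast
  then show "(x + y, a + b) \<in> ?G"
    by (auto intro!: exI[of _ "c + d"] simp: scaleR_add_left distrib_right)
next
  fix x a c assume "(x, a) \<in> ?G"
  then obtain d where "x = d *\<^sub>R z" "a = d * p z"
    by blast
  then show "(c *\<^sub>R x, c * a) \<in> ?G"
    by (auto intro!: exI[of _ "c * d"])
next
  fix x a assume "(x, a) \<in> ?G"
  then obtain c where "x = c *\<^sub>R z" and "a = c * p z"
    by blast
  then show "a \<le> p x"
    using sublinear_line_bound[OF p] by simp
qed

corollary hahn_banach_point:
  assumes "sublinear p"
  shows "\<exists>f. linear f \<and> f z = p z \<and> (\<forall>x. f x \<le> p x)"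
proof -
  obtain f where f: "linear f" "\<And>x a. (x, a) \<in> {(c *\<^sub>R z, c * p z) | c. True} \<Longrightarrow> f x = a"
    "\<And>x. f x \<le> p x"
    using hahn_banach[OF assms dominated_line_graph[OF assms, of z]] by blast
  have "(z, p z) \<in> {(c *\<^sub>R z, c * p z) | c. True}"
    by (intro CollectI exI[of _ 1]) simp
  then show ?thesis using f by blast
qed

section \<open>The dual of a locally convex space separates points\<close>

definition minkowski_functional :: "'a::real_vector set \<Rightarrow> 'a \<Rightarrow> real" where
  "minkowski_functional U v = Inf {t. 0 < t \<and> (1 / t) *\<^sub>R v \<in> U}"

locale absorbing_convex_set =
  fixes U :: "'a::real_vector set"
  assumes convex: "convex U" and zero_mem: "0 \<in> U"
    and absorbing: "\<And>v. \<exists>t>0. (1 / t) *\<^sub>R v \<in> U"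
begin

abbreviation "\<mu> \<equiv> minkowski_functional U"

lemma scalings_nonempty: "{t. 0 < t \<and> (1 / t) *\<^sub>R v \<in> U} \<noteq> {}"
  using absorbing[of v] by auto

lemma scalings_bdd_below: "bdd_below {t. 0 < t \<and> (1 / t) *\<^sub>R v \<in> U}"
  by (rule bdd_belowI[of _ 0]) simp

lemma minkowski_nonneg: "0 \<le> \<mu> v"
  unfolding minkowski_functional_def by (rule cInf_greatest[OF scalings_nonempty]) simp

lemma minkowski_le: "0 < t \<Longrightarrow> (1 / t) *\<^sub>R v \<in> U \<Longrightarrow> \<mu> v \<le> t"
  unfolding minkowski_functional_def by (rule cInf_lower[OF _ scalings_bdd_below]) simp

lemma minkowski_less_imp_mem:
  assumes "\<mu> v < t"
  shows "(1 / t) *\<^sub>R v \<in> U"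
proof -
  obtain t\<^sub>0 where "0 < t\<^sub>0" "(1 / t\<^sub>0) *\<^sub>R v \<in> U" "t\<^sub>0 < t"
    using cInf_lessD[OF scalings_nonempty assms[unfolded minkowski_functional_def]] by blast
  then have "(t\<^sub>0 / t) *\<^sub>R ((1 / t\<^sub>0) *\<^sub>R v) + (1 - t\<^sub>0 / t) *\<^sub>R 0 \<in> U"
    by (intro convexD[OF convex _ zero_mem]) auto
  then show ?thesis
    using \<open>0 < t\<^sub>0\<close> by simp
qed

lemma minkowski_le_one: "v \<in> U \<Longrightarrow> \<mu> v \<le> 1"
  using minkowski_le[of 1 v] by simp

lemma minkowski_ge_one: "v \<notin> U \<Longrightarrow> 1 \<le> \<mu> v"
  using minkowski_less_imp_mem[of v 1] by force

lemma minkowski_pos_scaleR_le: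
  assumes "0 < c"
  shows "\<mu> (c *\<^sub>R v) \<le> c * \<mu> v"
proof (rule field_le_epsilon)
  fix e :: real assume "0 < e"
  define t where "t = \<mu> v + e / c"
  have "0 < t"
    using minkowski_nonneg[of v] \<open>0 < e\<close> assms by (simp add: t_def add_nonneg_pos)
  moreover have "(1 / t) *\<^sub>R v \<in> U"
    using \<open>0 < e\<close> assms by (intro minkowski_less_imp_mem) (simp add: t_def)
  ultimately have "\<mu> (c *\<^sub>R v) \<le> c * t"
    using assms by (intro minkowski_le) auto
  then show "\<mu> (c *\<^sub>R v) \<le> c * \<mu> v + e"
    using assms by (simp add: t_def algebra_simps)
qed

lemma minkowski_sublinear: "sublinear \<mu>"
  unfolding sublinear_def
proof (intro conjI allI impI)
  fix u v
  show "\<mu> (u + v) \<le> \<mu> u + \<mu> v"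
  proof (rule field_le_epsilon)
    fix e :: real assume "0 < e"
    define s t where "s = \<mu> u + e / 2" and "t = \<mu> v + e / 2"
    have s: "0 < s" "(1 / s) *\<^sub>R u \<in> U" and t: "0 < t" "(1 / t) *\<^sub>R v \<in> U"
      using minkowski_less_imp_mem minkowski_nonneg \<open>0 < e\<close>
      by (auto simp: s_def t_def add_nonneg_pos)
    have "(s / (s + t)) *\<^sub>R ((1 / s) *\<^sub>R u) + (t / (s + t)) *\<^sub>R ((1 / t) *\<^sub>R v) \<in> U"
      using s t by (intro convexD[OF convex]) (auto simp: add_divide_distrib[symmetric])
    then have "(1 / (s + t)) *\<^sub>R (u + v) \<in> U"
      using s t by (simp add: scaleR_add_right)
    then have "\<mu> (u + v) \<le> s + t"
      using s t by (intro minkowski_le) auto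
    then show "\<mu> (u + v) \<le> \<mu> u + \<mu> v + e"
      by (simp add: s_def t_def)
  qed
next
  fix c :: real and v assume "0 < c"
  have "\<mu> v = \<mu> ((1 / c) *\<^sub>R (c *\<^sub>R v))"
    using \<open>0 < c\<close> by simp
  also have "\<dots> \<le> (1 / c) * \<mu> (c *\<^sub>R v)"
    using \<open>0 < c\<close> by (intro minkowski_pos_scaleR_le) simp
  finally have "c * \<mu> v \<le> \<mu> (c *\<^sub>R v)"
    using \<open>0 < c\<close> by (simp add: field_simps)
  with minkowski_pos_scaleR_le[OF \<open>0 < c\<close>, of v] show "\<mu> (c *\<^sub>R v) = c * \<mu> v"
    by linarith
qed

lemma minkowski_symmetric:
  assumes "\<And>v. - v \<in> U \<longleftrightarrow> v \<in> U"
  shows "\<mu> (- v) = \<mu> v"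
  unfolding minkowski_functional_def using assms[of "(1 / _) *\<^sub>R v"] by simp

end

lemma tvs_dual_zero: "(\<lambda>x. 0) \<in> tvs_dual T"
  unfolding tvs_dual_def by (simp add: linear_zero)

lemma tvs_dual_add: "f \<in> tvs_dual T \<Longrightarrow> g \<in> tvs_dual T \<Longrightarrow> (\<lambda>x. f x + g x) \<in> tvs_dual T"
  unfolding tvs_dual_def by (auto intro: linear_compose_add continuous_map_add)

lemma tvs_dual_scale: "f \<in> tvs_dual T \<Longrightarrow> (\<lambda>x. c * f x) \<in> tvs_dual T"
  unfolding tvs_dual_def
  by (auto intro!: linearI continuous_map_real_mult simp: linear_add linear_scale algebra_simps)

lemma tvs_dual_sum:
  "(\<And>i. i \<in> I \<Longrightarrow> f i \<in> tvs_dual T) \<Longrightarrow> (\<lambda>x. \<Sum>i\<in>I. c i * f i x) \<in> tvs_dual T"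
  by (induction I rule: infinite_finite_induct) (simp_all add: tvs_dual_zero tvs_dual_add tvs_dual_scale)

locale hlc_space =
  fixes T :: "'a::real_vector topology"
  assumes hlc: "hlc_tvs T"
begin

lemma topspace_eq [simp]: "topspace T = UNIV"
  using hlc unfolding hlc_tvs_def by blast

lemma continuous_map_add_const: "continuous_map T T (\<lambda>x. x + c)"
proof -
  have "continuous_map T (prod_topology T T) (\<lambda>x. (x, c))"
    by (intro continuous_map_pairedI) (simp_all add: continuous_map_id[unfolded id_def])
  moreover have "continuous_map (prod_topology T T) T (\<lambda>(x, y). x + y)"
    using hlc unfolding hlc_tvs_def by blast
  ultimately show ?thesis
    by (auto dest: continuous_map_compose simp: o_def)
qed

lemma continuous_map_scaleR_const: "continuous_map T T (\<lambda>x. c *\<^sub>R x)"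
proof -
  have "continuous_map T (prod_topology euclideanreal T) (\<lambda>x. (c, x))"
    by (intro continuous_map_pairedI) (simp_all add: continuous_map_id[unfolded id_def])
  moreover have "continuous_map (prod_topology euclideanreal T) T (\<lambda>(c, x). c *\<^sub>R x)"
    using hlc unfolding hlc_tvs_def by blast
  ultimately show ?thesis
    by (auto dest: continuous_map_compose simp: o_def)
qed

lemma continuous_map_scaleR_vector: "continuous_map euclideanreal T (\<lambda>t. t *\<^sub>R v)"
proof -
  have "continuous_map euclideanreal (prod_topology euclideanreal T) (\<lambda>t. (t, v))"
    by (intro continuous_map_pairedI) (simp_all add: continuous_map_id[unfolded id_def])
  moreover have "continuous_map (prod_topology euclideanreal T) T (\<lambda>(c, x). c *\<^sub>R x)"
    using hlc unfolding hlc_tvs_def by blast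
  ultimately show ?thesis
    by (auto dest: continuous_map_compose simp: o_def)
qed

lemma openin_preimage:
  assumes "continuous_map T T g" and "openin T U"
  shows "openin T {x. g x \<in> U}"
  using openin_continuous_map_preimage[OF assms] by simp

lemma open_nbhd_absorbing:
  assumes "openin T U" "0 \<in> U"
  shows "\<exists>t>0. (1 / t) *\<^sub>R v \<in> U"
proof -
  have "openin euclideanreal {s \<in> topspace euclideanreal. s *\<^sub>R v \<in> U}"
    using openin_continuous_map_preimage[OF continuous_map_scaleR_vector assms(1)] .
  then have "open {s. s *\<^sub>R v \<in> U}" by simp
  moreover have "0 \<in> {s. s *\<^sub>R v \<in> U}" using assms(2) by simp
  ultimately obtain d where "d > 0" and d: "ball 0 d \<subseteq> {s. s *\<^sub>R v \<in> U}"
    unfolding open_contains_ball by blast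
  have "d / 2 \<in> ball 0 d" using \<open>d > 0\<close> by simp
  then have "(d / 2) *\<^sub>R v \<in> U" using d by blast
  then have "(1 / (2 / d)) *\<^sub>R v \<in> U" by simp
  with \<open>d > 0\<close> show ?thesis by (intro exI[of _ "2 / d"]) simp
qed

lemma symmetric_convex_nbhd:
  assumes "openin T W" "0 \<in> W"
  obtains U where "openin T U" "convex U" "0 \<in> U" "U \<subseteq> W" "\<And>v. - v \<in> U \<longleftrightarrow> v \<in> U"
proof -
  obtain U\<^sub>1 where U\<^sub>1: "openin T U\<^sub>1" "convex U\<^sub>1" "0 \<in> U\<^sub>1" "U\<^sub>1 \<subseteq> W"
    using hlc assms unfolding hlc_tvs_def by blast
  have "linear (\<lambda>x::'a. - x)" by (rule linearI) auto
  then have "convex (uminus -` U\<^sub>1)"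
    using U\<^sub>1(2) by (rule convex_linear_vimage)
  moreover have "openin T {v. (-1) *\<^sub>R v \<in> U\<^sub>1}"
    by (rule openin_preimage[OF continuous_map_scaleR_const U\<^sub>1(1)])
  then have "openin T (uminus -` U\<^sub>1)" by (simp add: vimage_def)
  ultimately show ?thesis
    using U\<^sub>1 by (intro that[of "U\<^sub>1 \<inter> uminus -` U\<^sub>1"] openin_Int convex_Int) auto
qed

lemma linear_continuous_if_bounded_on_nbhd:
  assumes f: "linear f" and U: "openin T U" "0 \<in> U" and bounded: "\<And>v. v \<in> U \<Longrightarrow> \<bar>f v\<bar> \<le> 1"
  shows "continuous_map T euclideanreal f"
  unfolding continuous_map_def
proof (intro conjI allI impI)
  fix B :: "real set" assume "openin euclideanreal B"
  show "openin T {x \<in> topspace T. f x \<in> B}"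
  proof (subst openin_subopen, intro ballI)
    fix x\<^sub>0 assume "x\<^sub>0 \<in> {x \<in> topspace T. f x \<in> B}"
    then obtain r where "r > 0" and r: "ball (f x\<^sub>0) r \<subseteq> B"
      using \<open>openin euclideanreal B\<close> open_contains_ball by force
    define N where "N = {v. (2 / r) *\<^sub>R (v - x\<^sub>0) \<in> U}"
    have "openin T N"
      unfolding N_def using openin_preimage[OF continuous_map_compose[OF
          continuous_map_add_const[of "- x\<^sub>0"] continuous_map_scaleR_const[of "2 / r"]] U(1)]
      by (simp add: o_def)
    moreover have "f v \<in> B" if "v \<in> N" for v
    proof -
      have "f ((2 / r) *\<^sub>R (v - x\<^sub>0)) = (2 / r) * (f v - f x\<^sub>0)"
        by (simp only: linear_scale[OF f] linear_diff[OF f] real_scaleR_def)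
      then have "\<bar>f ((2 / r) *\<^sub>R (v - x\<^sub>0))\<bar> = (2 / r) * \<bar>f v - f x\<^sub>0\<bar>"
        using \<open>r > 0\<close> by (simp only: abs_mult) simp
      moreover have "\<bar>f ((2 / r) *\<^sub>R (v - x\<^sub>0))\<bar> \<le> 1"
        using bounded that by (simp add: N_def)
      ultimately have "(2 / r) * \<bar>f v - f x\<^sub>0\<bar> \<le> 1" by simp
      then have "\<bar>f v - f x\<^sub>0\<bar> < r"
        using \<open>r > 0\<close> by (simp add: field_simps)
      then show ?thesis
        using r by (auto simp: dist_real_def abs_minus_commute)
    qed
    moreover have "x\<^sub>0 \<in> N" using U(2) by (simp add: N_def)
    ultimately show "\<exists>N. openin T N \<and> x\<^sub>0 \<in> N \<and> N \<subseteq> {x \<in> topspace T. f x \<in> B}"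
      by auto
  qed
qed auto

theorem tvs_dual_separates_points:
  assumes "x \<noteq> y"
  shows "\<exists>f\<in>tvs_dual T. f x \<noteq> f y"
proof -
  have "\<forall>a b. a \<noteq> b \<longrightarrow> (\<exists>W W'. openin T W \<and> openin T W' \<and> a \<in> W \<and> b \<in> W' \<and> disjnt W W')"
    using hlc unfolding hlc_tvs_def Hausdorff_space_def by simp
  moreover have "0 \<noteq> x - y" using assms by simp
  ultimately obtain W W' where W: "openin T W" "0 \<in> W" and "x - y \<in> W'" "disjnt W W'"
    by blast
  then have "x - y \<notin> W" by (auto simp: disjnt_def)
  obtain U where U: "openin T U" "convex U" "0 \<in> U" "U \<subseteq> W" "\<And>v. - v \<in> U \<longleftrightarrow> v \<in> U"
    using symmetric_convex_nbhd[OF W] by blast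
  interpret absorbing_convex_set U
    by unfold_locales (use U open_nbhd_absorbing[OF U(1,3)] in auto)
  obtain f where f: "linear f" "f (x - y) = \<mu> (x - y)" "\<And>v. f v \<le> \<mu> v"
    using hahn_banach_point[OF minkowski_sublinear] by blast
  have "- f v \<le> \<mu> v" for v
    using f(3)[of "- v"] linear_neg[OF f(1)] minkowski_symmetric[OF U(5)] by simp
  then have "\<bar>f v\<bar> \<le> \<mu> v" for v
    using f(3)[of v] by (simp add: abs_le_iff)
  then have "\<bar>f v\<bar> \<le> 1" if "v \<in> U" for v
    using minkowski_le_one[OF that] order_trans by blast
  then have "continuous_map T euclideanreal f"
    by (rule linear_continuous_if_bounded_on_nbhd[OF f(1) U(1,3)])
  then have "f \<in> tvs_dual T"
    using f(1) by (simp add: tvs_dual_def)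
  moreover have "1 \<le> f (x - y)"
    using f(2) minkowski_ge_one \<open>x - y \<notin> W\<close> U(4) by auto
  then have "f x \<noteq> f y"
    using linear_diff[OF f(1)] by auto
  ultimately show ?thesis by blast
qed

lemma tvs_dual_separates_points_by:
  assumes "x \<noteq> y" and "0 \<le> r"
  shows "\<exists>f\<in>tvs_dual T. \<bar>f x - f y\<bar> = r"
proof -
  obtain f where f: "f \<in> tvs_dual T" "f x \<noteq> f y"
    using tvs_dual_separates_points[OF assms(1)] by blast
  define c where "c = r / \<bar>f x - f y\<bar>"
  have "c * f x - c * f y = c * (f x - f y)"
    by (simp add: right_diff_distrib)
  then have "\<bar>c * f x - c * f y\<bar> = c * \<bar>f x - f y\<bar>"
    using assms(2) by (simp add: c_def abs_mult)
  also have "\<dots> = r" using f(2) by (simp add: c_def)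
  finally show ?thesis
    using tvs_dual_scale[OF f(1), of c] by (intro bexI[of _ "\<lambda>x. c * f x"])
qed

lemma compact_weak_nbhd:
  assumes V: "compactin T V" and u: "u \<in> W" and W: "openin T W"
  shows "\<exists>F. finite F \<and> F \<subseteq> tvs_dual T \<and> (\<forall>x\<in>V. (\<forall>f\<in>F. \<bar>f x - f u\<bar> < 1) \<longrightarrow> x \<in> W)"
proof -
  define C where "C = (topspace T - W) \<inter> V"
  have C: "compactin T C"
    unfolding C_def using V closedin_diff[OF closedin_topspace W] by (intro closed_Int_compactin)
  have "\<exists>g\<in>tvs_dual T. \<bar>g v - g u\<bar> = 2" if "v \<in> C" for v
    using that u by (intro tvs_dual_separates_points_by) (auto simp: C_def)
  then obtain g where g: "\<And>v. v \<in> C \<Longrightarrow> g v \<in> tvs_dual T \<and> \<bar>g v v - g v u\<bar> = 2"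
    by metis
  define B where "B v = {x. 1 < \<bar>g v x - g v u\<bar>}" for v
  have "openin T (B v)" if "v \<in> C" for v
  proof -
    have "continuous_map T euclideanreal (\<lambda>x. \<bar>g v x - g v u\<bar>)"
      using g[OF that] unfolding tvs_dual_def by (intro continuous_intros) auto
    from openin_continuous_map_preimage[OF this, of "{1<..}"] show ?thesis
      by (simp add: B_def)
  qed
  moreover have "C \<subseteq> \<Union>(B ` C)"
    using g by (force simp: B_def)
  ultimately have "\<exists>\<C>. finite \<C> \<and> \<C> \<subseteq> B ` C \<and> C \<subseteq> \<Union>\<C>"
    by (intro compactinD[OF C]) auto
  then obtain C\<^sub>0 where C\<^sub>0: "finite C\<^sub>0" "C\<^sub>0 \<subseteq> C" "C \<subseteq> \<Union>(B ` C\<^sub>0)"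
    unfolding ex_finite_subset_image by blast
  have "x \<in> W" if "x \<in> V" and small: "\<forall>f\<in>g ` C\<^sub>0. \<bar>f x - f u\<bar> < 1" for x
  proof (rule ccontr)
    assume "x \<notin> W"
    then obtain v where "v \<in> C\<^sub>0" "x \<in> B v"
      using C\<^sub>0(3) \<open>x \<in> V\<close> by (auto simp: C_def)
    then show False using small by (auto simp: B_def)
  qed
  then show ?thesis
    using C\<^sub>0 g by (intro exI[of _ "g ` C\<^sub>0"]) auto
qed

end

section \<open>Partitions of unity by networks on the dual\<close>

definition evaluations :: "('a \<Rightarrow> real) set \<Rightarrow> 'a \<Rightarrow> ('a \<Rightarrow> real) \<Rightarrow> real" where
  "evaluations F x = (\<lambda>f. if f \<in> F then f x else 0)"

lemma finite_functionals_coordinates: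
  fixes F :: "('a::real_vector \<Rightarrow> real) set"
  assumes F: "finite F" "F \<subseteq> tvs_dual T"
  obtains n and \<Phi> :: "'a \<Rightarrow> nat \<Rightarrow> real" and R :: "(nat \<Rightarrow> real) \<Rightarrow> ('a \<Rightarrow> real) \<Rightarrow> real"
  where "continuous_map T euclidean \<Phi>" and "\<And>x j. n \<le> j \<Longrightarrow> \<Phi> x j = 0"
    and "\<And>w. (\<lambda>x. \<Sum>j<n. w j * \<Phi> x j) \<in> tvs_dual T"
    and "continuous_on UNIV R" and "\<And>x. R (\<Phi> x) = evaluations F x"
proof -
  (* Stone-Weierstrass needs a Hausdorff type, so the values of the functionals are moved to the
     metric space nat => real by enumerating F. *)
  obtain n and f :: "nat \<Rightarrow> 'a \<Rightarrow> real" where f: "bij_betw f {..<n} F"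
    using ex_bij_betw_nat_finite[OF F(1)] atLeast0LessThan by metis
  then have f_dual: "f j \<in> tvs_dual T" if "j < n" for j
    using F(2) that by (auto simp: bij_betw_def)
  define \<Phi> where "\<Phi> x = (\<lambda>j. if j < n then f j x else 0)" for x
  define R where "R z = (\<lambda>g. if g \<in> F then z (inv_into {..<n} f g) else 0)" for z :: "nat \<Rightarrow> real"
  show ?thesis
  proof (rule that)
    show "continuous_map T euclidean \<Phi>"
      unfolding euclidean_product_topology[symmetric] continuous_map_componentwise_UNIV \<Phi>_def
      using f_dual by (auto simp: tvs_dual_def)
    show "(\<lambda>x. \<Sum>j<n. w j * \<Phi> x j) \<in> tvs_dual T" for w
      using f_dual by (auto simp: \<Phi>_def intro!: tvs_dual_sum)
    show "continuous_on UNIV R"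
      unfolding R_def
    proof (intro continuous_on_coordinatewise_then_product)
      show "continuous_on UNIV (\<lambda>z. if g \<in> F then z (inv_into {..<n} f g) else 0)" for g
        by (cases "g \<in> F") (simp_all add: continuous_on_coordinate)
    qed
    show "R (\<Phi> x) = evaluations F x" for x
      using f by (auto simp: R_def \<Phi>_def evaluations_def fun_eq_iff bij_betw_def
          inv_into_into[where A = "{..<n}"] f_inv_into_f)
  qed (simp add: \<Phi>_def)
qed

lemma function_of_functionals_approximable:
  fixes A :: "(('a::real_vector \<Rightarrow> real) \<Rightarrow> real) \<Rightarrow> real"
  assumes V: "compactin T V" and F: "finite F" "F \<subseteq> tvs_dual T" and \<sigma>: "tauber_wiener \<sigma>"
    and A: "continuous_on (evaluations F ` V) A"
  shows "uniformly_approximable V (ridge_nets (tvs_dual T) \<sigma>) (\<lambda>x. A (evaluations F x))"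
proof -
  obtain n :: nat and \<Phi> :: "'a \<Rightarrow> nat \<Rightarrow> real" and R where \<Phi>: "continuous_map T euclidean \<Phi>" "\<And>x j. n \<le> j \<Longrightarrow> \<Phi> x j = 0"
    "\<And>w. (\<lambda>x. \<Sum>j<n. w j * \<Phi> x j) \<in> tvs_dual T"
    and R: "continuous_on UNIV R" "\<And>x. R (\<Phi> x) = evaluations F x"
    by (rule finite_functionals_coordinates[OF F]) blast
  have S: "compact (\<Phi> ` V)"
    using image_compactin[OF V \<Phi>(1)] by simp
  have "R ` \<Phi> ` V = evaluations F ` V"
    using R(2) by (simp add: image_image)
  then have cont: "continuous_on (\<Phi> ` V) (\<lambda>z. A (R z))"
    by (intro continuous_on_compose2[OF A continuous_on_subset[OF R(1)]]) simp_all
  have "\<exists>j\<in>{..<n}. z j \<noteq> z' j" if "z \<in> \<Phi> ` V" "z' \<in> \<Phi> ` V" "z \<noteq> z'" for z z'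
  proof -
    obtain j where "z j \<noteq> z' j" using \<open>z \<noteq> z'\<close> by (auto simp: fun_eq_iff)
    moreover from this have "j < n" using that(1,2) \<Phi>(2) by (metis imageE not_less)
    ultimately show ?thesis by auto
  qed
  then interpret separating_linear_family "linear_combinations (\<lambda>j z. z j) {..<n}" "\<Phi> ` V"
    by (intro separating_linear_family_linear_combinations[where \<phi> = "\<lambda>j z. z j", OF S finite_lessThan
          continuous_on_coordinate])
  have "uniformly_approximable (\<Phi> ` V)
      (ridge_nets (linear_combinations (\<lambda>j z. z j) {..<n}) \<sigma>) (\<lambda>z. A (R z))"
    by (rule ridge_nets_dense_real[OF \<sigma> cont])
  then have "uniformly_approximable V (ridge_nets (tvs_dual T) \<sigma>) (\<lambda>x. A (R (\<Phi> x)))"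
  proof (rule uniformly_approximable_comp[OF _ subset_refl])
    fix h assume "h \<in> ridge_nets (linear_combinations (\<lambda>j z. z j) {..<n}) \<sigma>"
    then show "(\<lambda>x. h (\<Phi> x)) \<in> ridge_nets (tvs_dual T) \<sigma>"
      by (rule ridge_nets_comp) (auto simp: linear_combinations_def \<Phi>(3))
  qed
  then show ?thesis by (simp add: R(2))
qed

lemma prod_max_zero_pos_iff:
  fixes g :: "'i \<Rightarrow> real"
  assumes "finite I"
  shows "0 < (\<Prod>i\<in>I. max 0 (g i)) \<longleftrightarrow> (\<forall>i\<in>I. 0 < g i)"
proof
  assume pos: "0 < (\<Prod>i\<in>I. max 0 (g i))"
  show "\<forall>i\<in>I. 0 < g i"
  proof (intro ballI, rule ccontr)
    fix i assume "i \<in> I" and "\<not> 0 < g i"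
    then have "max 0 (g i) = 0" by simp
    then have "(\<Prod>i\<in>I. max 0 (g i)) = 0"
      using \<open>i \<in> I\<close> by (intro prod_zero[OF assms]) blast
    with pos show False by simp
  qed
next
  assume "\<forall>i\<in>I. 0 < g i"
  then show "0 < (\<Prod>i\<in>I. max 0 (g i))"
    by (intro prod_pos) simp
qed

definition bump :: "('a \<Rightarrow> real) set \<Rightarrow> 'a \<Rightarrow> (('a \<Rightarrow> real) \<Rightarrow> real) \<Rightarrow> real" where
  "bump F u z = (\<Prod>f\<in>F. max 0 (1 - \<bar>z f - f u\<bar>))"

lemma bump_nonneg: "0 \<le> bump F u z"
  unfolding bump_def by (simp add: prod_nonneg)

lemma continuous_on_bump: "continuous_on S (bump F u)"
  unfolding bump_def by (intro continuous_intros)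

lemma bump_evaluations_pos_iff:
  assumes "finite F" and "F \<subseteq> F'"
  shows "0 < bump F u (evaluations F' x) \<longleftrightarrow> (\<forall>f\<in>F. \<bar>f x - f u\<bar> < 1)"
proof -
  have "bump F u (evaluations F' x) = (\<Prod>f\<in>F. max 0 (1 - \<bar>f x - f u\<bar>))"
    unfolding bump_def evaluations_def using assms(2) by (intro prod.cong) auto
  then show ?thesis
    using prod_max_zero_pos_iff[OF assms(1), of "\<lambda>f. 1 - \<bar>f x - f u\<bar>"] by simp
qed

context hlc_space
begin

lemma compact_weak_cover:
  assumes V: "compactin T V" and W: "\<And>u. u \<in> V \<Longrightarrow> openin T (W u) \<and> u \<in> W u"
  obtains U F where "finite U" "U \<subseteq> V" "\<And>u. u \<in> U \<Longrightarrow> finite (F u) \<and> F u \<subseteq> tvs_dual T"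
    "\<And>u x. u \<in> U \<Longrightarrow> x \<in> V \<Longrightarrow> \<forall>f\<in>F u. \<bar>f x - f u\<bar> < 1 \<Longrightarrow> x \<in> W u"
    "\<And>x. x \<in> V \<Longrightarrow> \<exists>u\<in>U. \<forall>f\<in>F u. \<bar>f x - f u\<bar> < 1"
proof -
  have "\<exists>F. finite F \<and> F \<subseteq> tvs_dual T \<and> (\<forall>x\<in>V. (\<forall>f\<in>F. \<bar>f x - f u\<bar> < 1) \<longrightarrow> x \<in> W u)"
    if "u \<in> V" for u
    using compact_weak_nbhd[OF V] W[OF that] by blast
  then obtain F where F: "\<And>u. u \<in> V \<Longrightarrow> finite (F u) \<and> F u \<subseteq> tvs_dual T \<and>
      (\<forall>x\<in>V. (\<forall>f\<in>F u. \<bar>f x - f u\<bar> < 1) \<longrightarrow> x \<in> W u)"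
    by metis
  define N where "N u = (\<Inter>f\<in>F u. {x. \<bar>f x - f u\<bar> < 1})" for u
  have "openin T (N u)" if "u \<in> V" for u
  proof -
    have "openin T {x. \<bar>f x - f u\<bar> < 1}" if "f \<in> F u" for f
    proof -
      have "continuous_map T euclideanreal (\<lambda>x. \<bar>f x - f u\<bar>)"
        using F \<open>u \<in> V\<close> that unfolding tvs_dual_def by (intro continuous_intros) auto
      from openin_continuous_map_preimage[OF this, of "{..<1}"] show ?thesis by simp
    qed
    then show ?thesis
      using openin_INT[of "F u" T] F[OF that] by (simp add: N_def)
  qed
  moreover have "V \<subseteq> \<Union>(N ` V)" by (auto simp: N_def)
  ultimately have "\<exists>\<C>. finite \<C> \<and> \<C> \<subseteq> N ` V \<and> V \<subseteq> \<Union>\<C>"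
    by (intro compactinD[OF V]) auto
  then obtain U where U: "finite U" "U \<subseteq> V" "V \<subseteq> \<Union>(N ` U)"
    unfolding ex_finite_subset_image by blast
  show ?thesis
  proof (rule that[of U F])
    show "finite (F u) \<and> F u \<subseteq> tvs_dual T" if "u \<in> U" for u
      using F U(2) that by blast
    show "x \<in> W u" if "u \<in> U" "x \<in> V" "\<forall>f\<in>F u. \<bar>f x - f u\<bar> < 1" for u x
      using F U(2) that by blast
    show "\<exists>u\<in>U. \<forall>f\<in>F u. \<bar>f x - f u\<bar> < 1" if "x \<in> V" for x
      using U(3) that unfolding N_def by blast
  qed (use U in auto)
qed

lemma partition_of_unity_by_nets:
  assumes V: "compactin T V" and \<sigma>: "tauber_wiener \<sigma>"
    and W: "\<And>u. u \<in> V \<Longrightarrow> openin T (W u) \<and> u \<in> W u"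
  obtains U and a :: "'a \<Rightarrow> 'a \<Rightarrow> real" where "finite U" "U \<subseteq> V"
    "\<And>u x. u \<in> U \<Longrightarrow> x \<in> V \<Longrightarrow> 0 \<le> a u x"
    "\<And>x. x \<in> V \<Longrightarrow> (\<Sum>u\<in>U. a u x) = 1"
    "\<And>u x. u \<in> U \<Longrightarrow> x \<in> V \<Longrightarrow> 0 < a u x \<Longrightarrow> x \<in> W u"
    "\<And>u. u \<in> U \<Longrightarrow> uniformly_approximable V (ridge_nets (tvs_dual T) \<sigma>) (a u)"
proof -
  obtain U F where U: "finite U" "U \<subseteq> V" and F: "\<And>u. u \<in> U \<Longrightarrow> finite (F u) \<and> F u \<subseteq> tvs_dual T"
    and near: "\<And>u x. u \<in> U \<Longrightarrow> x \<in> V \<Longrightarrow> \<forall>f\<in>F u. \<bar>f x - f u\<bar> < 1 \<Longrightarrow> x \<in> W u"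
    and cover: "\<And>x. x \<in> V \<Longrightarrow> \<exists>u\<in>U. \<forall>f\<in>F u. \<bar>f x - f u\<bar> < 1"
    using compact_weak_cover[OF V W] by blast
  define e where "e = evaluations (\<Union>(F ` U))"
  have pos: "0 < bump (F u) u (e x) \<longleftrightarrow> (\<forall>f\<in>F u. \<bar>f x - f u\<bar> < 1)" if "u \<in> U" for u x
    unfolding e_def using F[OF that] that by (intro bump_evaluations_pos_iff) auto
  define A where "A u z = bump (F u) u z / (\<Sum>v\<in>U. bump (F v) v z)" for u z
  have den_pos: "0 < (\<Sum>v\<in>U. bump (F v) v z)" if z: "z \<in> e ` V" for z
  proof -
    obtain x where "x \<in> V" "z = e x" using z by blast
    moreover obtain u where "u \<in> U" "\<forall>f\<in>F u. \<bar>f x - f u\<bar> < 1"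
      using cover[OF \<open>x \<in> V\<close>] by blast
    ultimately show ?thesis
      using pos[of u x] bump_nonneg by (intro sum_pos2[OF U(1) \<open>u \<in> U\<close>]) auto
  qed
  show ?thesis
  proof (rule that[of U "\<lambda>u x. A u (e x)"])
    fix x assume "x \<in> V"
    then have "0 < (\<Sum>v\<in>U. bump (F v) v (e x))" by (intro den_pos) simp
    then show "(\<Sum>u\<in>U. A u (e x)) = 1"
      by (simp add: A_def sum_divide_distrib[symmetric])
    fix u assume "u \<in> U"
    show "0 \<le> A u (e x)"
      by (simp add: A_def bump_nonneg sum_nonneg)
    assume "0 < A u (e x)"
    then show "x \<in> W u"
      using near[OF \<open>u \<in> U\<close> \<open>x \<in> V\<close>] pos[OF \<open>u \<in> U\<close>] \<open>0 < (\<Sum>v\<in>U. bump (F v) v (e x))\<close>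
      by (simp add: A_def zero_less_divide_iff)
  next
    fix u assume "u \<in> U"
    have "continuous_on (e ` V) (A u)"
      unfolding A_def using den_pos
      by (intro continuous_on_divide continuous_on_sum continuous_on_bump) force+
    then show "uniformly_approximable V (ridge_nets (tvs_dual T) \<sigma>) (\<lambda>x. A u (e x))"
      unfolding e_def using U F by (intro function_of_functionals_approximable[OF V _ _ \<sigma>]) auto
  qed (use U in auto)
qed

end

section \<open>Branch and trunk networks\<close>

lemma norm_convex_combination_le:
  fixes v :: "'i \<Rightarrow> 'b::real_normed_vector"
  assumes a_nonneg: "\<And>u. u \<in> U \<Longrightarrow> 0 \<le> a u" and a_sum: "(\<Sum>u\<in>U. a u) = 1"
    and v: "\<And>u. u \<in> U \<Longrightarrow> 0 < a u \<Longrightarrow> norm (v u) \<le> e"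
  shows "norm (\<Sum>u\<in>U. a u *\<^sub>R v u) \<le> e"
proof -
  have "norm (\<Sum>u\<in>U. a u *\<^sub>R v u) \<le> (\<Sum>u\<in>U. a u * e)"
  proof (rule order_trans[OF norm_sum sum_mono])
    fix u assume "u \<in> U"
    show "norm (a u *\<^sub>R v u) \<le> a u * e"
    proof (cases "a u = 0")
      case False
      then show ?thesis
        using a_nonneg[OF \<open>u \<in> U\<close>] v[OF \<open>u \<in> U\<close>] by (simp add: mult_left_mono)
    qed simp
  qed
  also have "\<dots> = e" by (simp add: a_sum flip: sum_distrib_right)
  finally show ?thesis .
qed

lemma partition_of_unity_error:
  fixes G g :: "'i \<Rightarrow> 'b::real_normed_vector" and a h :: "'i \<Rightarrow> real"
    and e\<^sub>1 e\<^sub>2 \<eta> B :: real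
  assumes a_nonneg: "\<And>u. u \<in> U \<Longrightarrow> 0 \<le> a u" and a_sum: "(\<Sum>u\<in>U. a u) = 1"
    and near: "\<And>u. u \<in> U \<Longrightarrow> 0 < a u \<Longrightarrow> norm (c - G u) \<le> e\<^sub>1"
    and g: "\<And>u. u \<in> U \<Longrightarrow> norm (G u - g u) \<le> e\<^sub>2"
    and h: "\<And>u. u \<in> U \<Longrightarrow> \<bar>a u - h u\<bar> \<le> \<eta>" and B: "\<And>u. u \<in> U \<Longrightarrow> norm (g u) \<le> B"
  shows "norm (c - (\<Sum>u\<in>U. h u *\<^sub>R g u)) \<le> e\<^sub>1 + e\<^sub>2 + real (card U) * (\<eta> * B)"
proof -
  have "(\<Sum>u\<in>U. a u *\<^sub>R (c - G u)) + (\<Sum>u\<in>U. a u *\<^sub>R (G u - g u)) + (\<Sum>u\<in>U. (a u - h u) *\<^sub>R g u)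
      = (\<Sum>u\<in>U. a u *\<^sub>R c - h u *\<^sub>R g u)"
    by (simp add: sum.distrib[symmetric] algebra_simps)
  also have "\<dots> = c - (\<Sum>u\<in>U. h u *\<^sub>R g u)"
    by (simp add: sum_subtractf scaleR_sum_left[symmetric] a_sum)
  finally have split: "c - (\<Sum>u\<in>U. h u *\<^sub>R g u) =
      (\<Sum>u\<in>U. a u *\<^sub>R (c - G u)) + (\<Sum>u\<in>U. a u *\<^sub>R (G u - g u)) + (\<Sum>u\<in>U. (a u - h u) *\<^sub>R g u)" ..
  have "norm (\<Sum>u\<in>U. (a u - h u) *\<^sub>R g u) \<le> (\<Sum>u\<in>U. \<eta> * B)"
  proof (rule order_trans[OF norm_sum sum_mono])
    fix u assume "u \<in> U"
    then have "0 \<le> \<eta>" using h[of u] by linarith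
    then show "norm ((a u - h u) *\<^sub>R g u) \<le> \<eta> * B"
      using h B \<open>u \<in> U\<close> by (auto intro: mult_mono)
  qed
  then have "norm (\<Sum>u\<in>U. (a u - h u) *\<^sub>R g u) \<le> real (card U) * (\<eta> * B)" by simp
  moreover have "norm (\<Sum>u\<in>U. a u *\<^sub>R (c - G u)) \<le> e\<^sub>1" "norm (\<Sum>u\<in>U. a u *\<^sub>R (G u - g u)) \<le> e\<^sub>2"
    using a_nonneg a_sum near g by (auto intro!: norm_convex_combination_le)
  ultimately show ?thesis
    unfolding split by (smt (verit) norm_triangle_ineq)
qed

lemma topo_nn_scaleR:
  assumes "h \<in> ridge_nets (tvs_dual T) \<sigma>"
  shows "topo_nn T \<sigma> (\<lambda>x. h x *\<^sub>R (v :: real^'m))"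
proof -
  obtain n l \<theta> c where l: "\<forall>i<(n::nat). l i \<in> tvs_dual T"
    and h: "h = (\<lambda>x. \<Sum>i<n. \<sigma> (l i x - \<theta> i) *\<^sub>R c i)"
    using assms unfolding ridge_nets_iff by blast
  define f where "f i = (if i < n then l i else (\<lambda>x. 0))" for i
  define A where "A j i = (if i < n then c i * v $ j else 0)" for j i
  have "\<forall>i<Suc n. f i \<in> tvs_dual T"
    using l by (simp add: f_def tvs_dual_zero)
  moreover have "h x *\<^sub>R v = (\<chi> j. \<Sum>i<Suc n. A j i * \<sigma> (f i x - \<theta> i))" for x
  proof -
    have "(\<Sum>i<Suc n. A j i * \<sigma> (f i x - \<theta> i)) = (\<Sum>i<n. \<sigma> (l i x - \<theta> i) * c i * v $ j)" for j
      by (simp add: A_def f_def mult_ac)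
    then show ?thesis
      by (simp add: vec_eq_iff h sum_distrib_right)
  qed
  ultimately show ?thesis
    unfolding topo_nn_def by (intro exI[of _ "Suc n"] exI[of _ f] exI[of _ \<theta>] exI[of _ A]) simp
qed

definition branch_trunk_nets ::
    "'a::real_vector topology \<Rightarrow> (real \<Rightarrow> real) \<Rightarrow> ('a \<times> (real^'d) \<Rightarrow> real^'m) set" where
  "branch_trunk_nets T \<sigma> =
     finite_sums {(\<omega>, \<zeta>, b). topo_nn T \<sigma> b} (\<lambda>(\<omega>, \<zeta>, b) (u, y). \<sigma> (\<omega> \<bullet> y + \<zeta>) *\<^sub>R b u)"

lemma branch_trunk_nets_term:
  "topo_nn T \<sigma> b \<Longrightarrow> (\<lambda>(u, y). \<sigma> (\<omega> \<bullet> y + \<zeta>) *\<^sub>R b u) \<in> branch_trunk_nets T \<sigma>"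
  using finite_sums_term[of "(\<omega>, \<zeta>, b)" "{(\<omega>, \<zeta>, b). topo_nn T \<sigma> b}"
      "\<lambda>(\<omega>, \<zeta>, b) (u, y). \<sigma> (\<omega> \<bullet> y + \<zeta>) *\<^sub>R b u"]
  unfolding branch_trunk_nets_def by simp

lemma branch_trunk_nets_sum:
  "(\<And>i. i \<in> I \<Longrightarrow> H i \<in> branch_trunk_nets T \<sigma>) \<Longrightarrow> (\<lambda>z. \<Sum>i\<in>I. H i z) \<in> branch_trunk_nets T \<sigma>"
  unfolding branch_trunk_nets_def by (rule finite_sums_sum)

lemma branch_trunk_nets_scaleR:
  fixes g :: "real^'d \<Rightarrow> real^'m"
  assumes h: "h \<in> ridge_nets (tvs_dual T) \<sigma>"
    and g: "g \<in> ridge_nets (linear_combinations (\<lambda>i y. y $ i) UNIV) \<sigma>"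
  shows "(\<lambda>(x, y). h x *\<^sub>R g y) \<in> branch_trunk_nets T \<sigma>"
proof -
  obtain n l \<theta> v where l: "\<forall>k<(n::nat). l k \<in> linear_combinations (\<lambda>i y. y $ i) UNIV"
    and g_eq: "g = (\<lambda>y. \<Sum>k<n. \<sigma> (l k y - \<theta> k) *\<^sub>R v k)"
    using g unfolding ridge_nets_iff by blast
  have "\<forall>k<n. \<exists>w. l k = (\<lambda>y. \<Sum>i\<in>UNIV. w i * y $ i)"
    using l unfolding linear_combinations_def by blast
  then obtain w where w: "\<And>k. k < n \<Longrightarrow> l k = (\<lambda>y. \<Sum>i\<in>UNIV. w k i * y $ i)"
    by metis
  have l_inner: "l k y = (\<chi> i. w k i) \<bullet> y" if "k < n" for k y
    by (simp add: w[OF that] inner_vec_def)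
  have "(\<lambda>z. \<Sum>k<n. (\<lambda>(x, y). \<sigma> ((\<chi> i. w k i) \<bullet> y + - \<theta> k) *\<^sub>R (h x *\<^sub>R v k)) z)
      \<in> branch_trunk_nets T \<sigma>"
    by (intro branch_trunk_nets_sum branch_trunk_nets_term topo_nn_scaleR[OF h])
  moreover have "(\<lambda>z. \<Sum>k<n. (\<lambda>(x, y). \<sigma> ((\<chi> i. w k i) \<bullet> y + - \<theta> k) *\<^sub>R (h x *\<^sub>R v k)) z)
      = (\<lambda>(x, y). h x *\<^sub>R g y)"
    unfolding fun_eq_iff by (simp add: g_eq l_inner scaleR_sum_right scaleR_left_commute mult.commute)
  ultimately show ?thesis by simp
qed

lemma branch_trunk_nets_explicit:
  assumes "H \<in> branch_trunk_nets T \<sigma>"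
  shows "\<exists>p::nat. p \<ge> 1 \<and> (\<exists>\<omega> \<zeta> b. (\<forall>k<p. topo_nn T \<sigma> (b k)) \<and>
           (\<forall>u y. H (u, y) = (\<Sum>k<p. \<sigma> (\<omega> k \<bullet> y + \<zeta> k) *\<^sub>R b k u)))"
proof -
  (* padding with the zero network makes p \<ge> 1 *)
  have "topo_nn T \<sigma> (\<lambda>x. 0 :: real^'m)"
    using topo_nn_scaleR[OF ridge_nets_zero, of T \<sigma> 0] by simp
  then have "(0 :: real^'d, 0, \<lambda>x. 0 :: real^'m) \<in> {(\<omega>, \<zeta>, b). topo_nn T \<sigma> b}"
    by simp
  moreover have "(\<lambda>(\<omega>, \<zeta>, b) (u, y). \<sigma> (\<omega> \<bullet> y + \<zeta>) *\<^sub>R b u) (0 :: real^'d, 0, \<lambda>x. 0 :: real^'m) = (\<lambda>z. 0)"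
    by (simp add: fun_eq_iff)
  ultimately have "\<exists>(p::nat) a. p \<ge> 1 \<and> (\<forall>k<p. a k \<in> {(\<omega>, \<zeta>, b). topo_nn T \<sigma> b}) \<and>
      H = (\<lambda>z. \<Sum>k<p. (\<lambda>(\<omega>, \<zeta>, b) (u, y). \<sigma> (\<omega> \<bullet> y + \<zeta>) *\<^sub>R b u) (a k) z)"
    by (rule finite_sums_nonempty[OF assms[unfolded branch_trunk_nets_def]])
  then obtain p :: nat and a where "p \<ge> 1" and a: "\<forall>k<p. a k \<in> {(\<omega>, \<zeta>, b). topo_nn T \<sigma> b}"
    and H: "H = (\<lambda>z. \<Sum>k<p. (\<lambda>(\<omega>, \<zeta>, b) (u, y). \<sigma> (\<omega> \<bullet> y + \<zeta>) *\<^sub>R b u) (a k) z)"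
    by blast
  then show ?thesis
    by (intro exI[of _ p] conjI exI[of _ "\<lambda>k. fst (a k)"] exI[of _ "\<lambda>k. fst (snd (a k))"]
        exI[of _ "\<lambda>k. snd (snd (a k))"]) (auto simp: case_prod_beta)
qed

lemma trunk_approximations:
  fixes G :: "'u \<Rightarrow> real^'d \<Rightarrow> real^'m"
  assumes U: "finite U" and K: "compact K" and G: "\<And>u. u \<in> U \<Longrightarrow> continuous_on K (G u)"
    and \<sigma>: "tauber_wiener \<sigma>" and "0 < e"
  obtains g B where "\<And>u. u \<in> U \<Longrightarrow> g u \<in> ridge_nets (linear_combinations (\<lambda>i y. y $ i) UNIV) \<sigma>"
    "\<And>u y. u \<in> U \<Longrightarrow> y \<in> K \<Longrightarrow> norm (G u y - g u y) \<le> e"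
    "\<And>u y. u \<in> U \<Longrightarrow> y \<in> K \<Longrightarrow> norm (g u y) \<le> B" "0 \<le> B"
proof -
  interpret separating_linear_family "linear_combinations (\<lambda>i y. y $ i) UNIV" K
    by (rule separating_linear_family_linear_combinations[where \<phi> = "\<lambda>i y. y $ i", OF K])
      (auto intro: continuous_on_component[OF continuous_on_id] simp: vec_eq_iff)
  have "uniformly_approximable K (ridge_nets (linear_combinations (\<lambda>i y. y $ i) UNIV) \<sigma>) (G u)"
    if "u \<in> U" for u
    by (rule ridge_nets_dense[OF \<sigma> G[OF that]])
  then obtain g where g: "\<And>u. u \<in> U \<Longrightarrow> g u \<in> ridge_nets (linear_combinations (\<lambda>i y. y $ i) UNIV) \<sigma>"
    and close: "\<And>u y. u \<in> U \<Longrightarrow> y \<in> K \<Longrightarrow> norm (G u y - g u y) < e"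
    using uniformly_approximable_choice[OF _ \<open>0 < e\<close>] by blast
  have "compact (\<Union>u\<in>U. G u ` K)"
    using U K G by (intro compact_UN compact_continuous_image) auto
  then have "bounded (\<Union>u\<in>U. G u ` K)"
    by (rule compact_imp_bounded)
  then obtain B where "\<forall>z\<in>(\<Union>u\<in>U. G u ` K). norm z \<le> B"
    unfolding bounded_iff by blast
  then have B: "\<And>u y. u \<in> U \<Longrightarrow> y \<in> K \<Longrightarrow> norm (G u y) \<le> B"
    by blast
  have "norm (g u y) \<le> max 0 (B + e)" if "u \<in> U" "y \<in> K" for u y
    using B[OF that] close[OF that] norm_triangle_sub[of "g u y" "G u y"]
      norm_minus_commute[of "g u y" "G u y"] by linarith
  with g close show ?thesis
    by (intro that[of g "max 0 (B + e)"]) (auto intro: less_imp_le)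
qed

lemma branch_trunk_nets_partition:
  fixes g :: "'u \<Rightarrow> real^'d \<Rightarrow> real^'m"
  assumes "\<And>u. u \<in> U \<Longrightarrow> h u \<in> ridge_nets (tvs_dual T) \<sigma>"
    and "\<And>u. u \<in> U \<Longrightarrow> g u \<in> ridge_nets (linear_combinations (\<lambda>i y. y $ i) UNIV) \<sigma>"
  shows "(\<lambda>(x, y). \<Sum>u\<in>U. h u x *\<^sub>R g u y) \<in> branch_trunk_nets T \<sigma>"
proof -
  have "(\<lambda>z. \<Sum>u\<in>U. (\<lambda>(x, y). h u x *\<^sub>R g u y) z) \<in> branch_trunk_nets T \<sigma>"
    using assms by (intro branch_trunk_nets_sum branch_trunk_nets_scaleR)
  moreover have "(\<lambda>z. \<Sum>u\<in>U. (\<lambda>(x, y). h u x *\<^sub>R g u y) z) = (\<lambda>(x, y). \<Sum>u\<in>U. h u x *\<^sub>R g u y)"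
    by (simp add: fun_eq_iff)
  ultimately show ?thesis by simp
qed

lemma (in hlc_space) branch_trunk_approximation:
  fixes G :: "'a \<Rightarrow> real^'d \<Rightarrow> real^'m"
  assumes V: "compactin T V" and K: "compact K" and G: "\<And>u. u \<in> V \<Longrightarrow> continuous_on K (G u)"
    and W: "\<And>u. u \<in> V \<Longrightarrow> openin T (W u) \<and> u \<in> W u"
    and G_near: "\<And>u v y. u \<in> V \<Longrightarrow> v \<in> V \<Longrightarrow> v \<in> W u \<Longrightarrow> y \<in> K \<Longrightarrow> norm (G v y - G u y) \<le> e"
    and \<sigma>: "tauber_wiener \<sigma>" and "0 < e"
  obtains H where "H \<in> branch_trunk_nets T \<sigma>"
    "\<And>x y. x \<in> V \<Longrightarrow> y \<in> K \<Longrightarrow> norm (G x y - H (x, y)) \<le> 3 * e"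
proof -
  obtain U and a :: "'a \<Rightarrow> 'a \<Rightarrow> real" where U: "finite U" "U \<subseteq> V"
    and a: "\<And>u x. u \<in> U \<Longrightarrow> x \<in> V \<Longrightarrow> 0 \<le> a u x" "\<And>x. x \<in> V \<Longrightarrow> (\<Sum>u\<in>U. a u x) = 1"
      "\<And>u x. u \<in> U \<Longrightarrow> x \<in> V \<Longrightarrow> 0 < a u x \<Longrightarrow> x \<in> W u"
      "\<And>u. u \<in> U \<Longrightarrow> uniformly_approximable V (ridge_nets (tvs_dual T) \<sigma>) (a u)"
    using partition_of_unity_by_nets[OF V \<sigma> W] by blast
  obtain g B where g: "\<And>u. u \<in> U \<Longrightarrow> g u \<in> ridge_nets (linear_combinations (\<lambda>i y. y $ i) UNIV) \<sigma>"
    "\<And>u y. u \<in> U \<Longrightarrow> y \<in> K \<Longrightarrow> norm (G u y - g u y) \<le> e"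
    "\<And>u y. u \<in> U \<Longrightarrow> y \<in> K \<Longrightarrow> norm (g u y) \<le> B" "0 \<le> B"
    by (rule trunk_approximations[OF U(1) K _ \<sigma> \<open>0 < e\<close>, of G]) (use U G in auto)
  define \<eta> where "\<eta> = e / (card U * B + 1)"
  have "0 \<le> card U * B" using \<open>0 \<le> B\<close> by simp
  then have "\<eta> > 0" using \<open>0 < e\<close> by (simp add: \<eta>_def)
  with a(4) obtain h where h: "\<And>u. u \<in> U \<Longrightarrow> h u \<in> ridge_nets (tvs_dual T) \<sigma>"
    and a_h: "\<And>u x. u \<in> U \<Longrightarrow> x \<in> V \<Longrightarrow> \<bar>a u x - h u x\<bar> < \<eta>"
    using uniformly_approximable_choice[of U V "ridge_nets (tvs_dual T) \<sigma>" a \<eta>]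
    unfolding real_norm_def by blast
  have "card U * (\<eta> * B) = e * (card U * B / (card U * B + 1))"
    by (simp add: \<eta>_def)
  also have "\<dots> \<le> e"
    using \<open>0 \<le> card U * B\<close> \<open>0 < e\<close> by (intro mult_left_le) auto
  finally have "card U * (\<eta> * B) \<le> e" .
  moreover have "norm (G x y - (\<Sum>u\<in>U. h u x *\<^sub>R g u y)) \<le> e + e + card U * (\<eta> * B)"
    if "x \<in> V" "y \<in> K" for x y
  proof (rule partition_of_unity_error)
    fix u assume "u \<in> U"
    then show "0 \<le> a u x" "norm (G u y - g u y) \<le> e" "norm (g u y) \<le> B"
      using a(1) g(2,3) that by auto
    show "\<bar>a u x - h u x\<bar> \<le> \<eta>"
      using a_h[OF \<open>u \<in> U\<close> \<open>x \<in> V\<close>] by simp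
    assume "0 < a u x"
    then show "norm (G x y - G u y) \<le> e"
      using G_near a(3) U(2) \<open>u \<in> U\<close> that by blast
  qed (use a(2) that in auto)
  moreover have "(\<lambda>(x, y). \<Sum>u\<in>U. h u x *\<^sub>R g u y) \<in> branch_trunk_nets T \<sigma>"
    by (rule branch_trunk_nets_partition) (use h g(1) in auto)
  ultimately show ?thesis
    by (intro that[of "\<lambda>(x, y). \<Sum>u\<in>U. h u x *\<^sub>R g u y"]) fastforce+
qed

theorem mainTheorem3:
  fixes T :: "'a::real_vector topology"
    and V :: "'a set"
    and K :: "(real^'d) set"
    and G :: "'a \<Rightarrow> real^'d \<Rightarrow> real^'m"
    and \<sigma> :: "real \<Rightarrow> real"
    and \<epsilon> :: real
  assumes X: "hlc_tvs T"
    and V: "compactin T V"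
    and K: "compact K"
    and G_vals: "\<forall>u\<in>V. continuous_on K (G u)"
    and G_cont: "\<forall>u\<in>V. \<forall>e>0. \<exists>W. openin T W \<and> u \<in> W \<and>
                    (\<forall>v\<in>V \<inter> W. \<forall>y\<in>K. norm (G v y - G u y) \<le> e)"
    and \<sigma>_cont: "continuous_on UNIV \<sigma>"
    and \<sigma>_TW: "tauber_wiener \<sigma>"
    and \<epsilon>: "\<epsilon> > 0"
  shows "\<exists>p::nat. p \<ge> 1 \<and>
           (\<exists>(\<omega> :: nat \<Rightarrow> real^'d) (\<zeta> :: nat \<Rightarrow> real) (b :: nat \<Rightarrow> 'a \<Rightarrow> real^'m).
              (\<forall>k<p. topo_nn T \<sigma> (b k)) \<and>
              (\<exists>c<\<epsilon>. \<forall>u\<in>V. \<forall>y\<in>K.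
                 norm (G u y - (\<Sum>k<p. \<sigma> (\<omega> k \<bullet> y + \<zeta> k) *\<^sub>R b k u)) \<le> c))"
proof -
  interpret hlc_space T by (rule hlc_space.intro[OF X])
  have "\<epsilon>/4 > 0" using \<epsilon> by simp
  then have "\<forall>u\<in>V. \<exists>W. openin T W \<and> u \<in> W \<and> (\<forall>v\<in>V \<inter> W. \<forall>y\<in>K. norm (G v y - G u y) \<le> \<epsilon>/4)"
    using G_cont by blast
  from bchoice[OF this] obtain W where W: "\<And>u. u \<in> V \<Longrightarrow> openin T (W u) \<and> u \<in> W u"
    and G_near: "\<And>u v y. u \<in> V \<Longrightarrow> v \<in> V \<Longrightarrow> v \<in> W u \<Longrightarrow> y \<in> K \<Longrightarrow> norm (G v y - G u y) \<le> \<epsilon>/4"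
    by blast
  obtain H where "H \<in> branch_trunk_nets T \<sigma>"
    and H: "\<And>x y. x \<in> V \<Longrightarrow> y \<in> K \<Longrightarrow> norm (G x y - H (x, y)) \<le> 3 * (\<epsilon>/4)"
    by (rule branch_trunk_approximation[where G = G and W = W, OF V K _ W G_near \<sigma>_TW \<open>\<epsilon>/4 > 0\<close>])
      (use G_vals in auto)
  from branch_trunk_nets_explicit[OF this(1)] obtain p :: nat and \<omega> \<zeta> b where "p \<ge> 1"
    and "\<forall>k<p. topo_nn T \<sigma> (b k)"
    and "\<And>x y. H (x, y) = (\<Sum>k<p. \<sigma> (\<omega> k \<bullet> y + \<zeta> k) *\<^sub>R b k x)"
    by blast
  with H \<epsilon> show ?thesis
    by (intro exI[of _ p] conjI exI[of _ \<omega>] exI[of _ \<zeta>] exI[of _ b] exI[of _ "3 * (\<epsilon>/4)"]) auto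
qed

end
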